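(* For any smooth complex-valued potential $V$, the number $k_2:=\dim\big(\mathfrak g^{\mathrm{ess}}_V\cap\langle G(\chi),\sigma M,\rho I\rangle\big)-2$ belongs to $\{0,2\}$, where the span is over all smooth real functions $\chi,\sigma,\rho$ of $t$.
   Context: $\mathfrak g_V$ is the maximal Lie invariance algebra of $i\psi_t+\psi_{xx}+V(t,x)\psi=0$ ($\psi$ complex of real $t,x$; vector fields on $(t,x,\psi,\psi^* )$, $\psi^*$ an additional dependent variable), considered locally. With $M=i\psi\partial_\psi-i\psi^*\partial_{\psi^*}$, $I=\psi\partial_\psi+\psi^*\partial_{\psi^*}$, $D(\tau)=\tau\partial_t+\frac12\tau_tx\partial_x+\frac18\tau_{tt}x^2M$, $G(\chi)=\chi\partial_x+\frac12\chi_txM$, set $\mathfrak g^{\mathrm{ess}}_V:=\mathfrak g_V\cap\langle D(\tau),G(\chi),\sigma(t)M,\rho(t)I\rangle$ (span over all smooth real $\tau,\chi,\sigma,\rho$ of $t$); $\sigma M$, $\rho I$ mean $\sigma(t)M$, $\rho(t)I$. *)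

theory Defs
  imports "HOL-Analysis.Analysis" "HOL-Library.Function_Algebras"
begin

fun iter_dd :: "('a::real_normed_vector \<Rightarrow> 'b::real_normed_vector) \<Rightarrow> 'a list \<Rightarrow> 'a \<Rightarrow> 'b" where
  "iter_dd f [] = f"
| "iter_dd f (h # hs) = (\<lambda>p. frechet_derivative (iter_dd f hs) (at p) h)"

definition smooth_on :: "'a::real_normed_vector set \<Rightarrow> ('a \<Rightarrow> 'b::real_normed_vector) \<Rightarrow> bool" where
  "smooth_on S f \<longleftrightarrow> (\<forall>hs. \<forall>p\<in>S. iter_dd f hs differentiable (at p))"

text \<open>Points (t, x, psi); psi* = conj psi. A real vector field
 tau d_t + xi d_x + eta d_psi + eta* d_psi* (eta* = conj eta) is encoded as the map
 p \<mapsto> (tau p, xi p, eta p).\<close>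

type_synonym pt = "real \<times> real \<times> complex"
type_synonym vfield = "pt \<Rightarrow> real \<times> real \<times> complex"

definition vscale :: "real \<Rightarrow> vfield \<Rightarrow> vfield" where
  "vscale r Q = (\<lambda>p. r *\<^sub>R Q p)"

definition cf_tau :: "vfield \<Rightarrow> pt \<Rightarrow> real" where "cf_tau Q = (\<lambda>p. fst (Q p))"
definition cf_xi  :: "vfield \<Rightarrow> pt \<Rightarrow> real" where "cf_xi Q = (\<lambda>p. fst (snd (Q p)))"
definition cf_eta :: "vfield \<Rightarrow> pt \<Rightarrow> complex" where "cf_eta Q = (\<lambda>p. snd (snd (Q p)))"

definition vf_dom :: "(real \<times> real) set \<Rightarrow> pt set" where
  "vf_dom \<Omega> = {(t, x, \<psi>). (t, x) \<in> \<Omega>}"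

definition dd :: "('a::real_normed_vector \<Rightarrow> 'b::real_normed_vector) \<Rightarrow> 'a \<Rightarrow> 'a \<Rightarrow> 'b" where
  "dd F p h = frechet_derivative F (at p) h"

definition dd2 :: "('a::real_normed_vector \<Rightarrow> 'b::real_normed_vector) \<Rightarrow> 'a \<Rightarrow> 'a \<Rightarrow> 'a \<Rightarrow> 'b" where
  "dd2 F p h k = frechet_derivative (\<lambda>q. dd F q h) (at p) k"

text \<open>Total derivatives of a function F(t,x,psi,psi*) on the jet space.\<close>

definition Tot_t :: "(pt \<Rightarrow> 'b::real_normed_vector) \<Rightarrow> pt \<Rightarrow> complex \<Rightarrow> 'b" where
  "Tot_t F p \<psi>t = dd F p (1, 0, 0) + dd F p (0, 0, \<psi>t)"

definition Tot_x :: "(pt \<Rightarrow> 'b::real_normed_vector) \<Rightarrow> pt \<Rightarrow> complex \<Rightarrow> 'b" where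
  "Tot_x F p \<psi>x = dd F p (0, 1, 0) + dd F p (0, 0, \<psi>x)"

definition Tot_xx :: "(pt \<Rightarrow> 'b::real_normed_vector) \<Rightarrow> pt \<Rightarrow> complex \<Rightarrow> complex \<Rightarrow> 'b" where
  "Tot_xx F p \<psi>x \<psi>xx =
     dd2 F p (0, 1, 0) (0, 1, 0) + dd2 F p (0, 1, 0) (0, 0, \<psi>x)
   + dd2 F p (0, 0, \<psi>x) (0, 1, 0) + dd2 F p (0, 0, \<psi>x) (0, 0, \<psi>x)
   + dd F p (0, 0, \<psi>xx)"

text \<open>pr^(2) Q applied to E = i psi_t + psi_xx + V(t,x) psi, at the jet point
 (t,x,psi, psi_t, psi_x, psi_tx, psi_xx) (psi_tt does not occur).\<close>

definition prE :: "(real \<times> real \<Rightarrow> complex) \<Rightarrow> vfield \<Rightarrow> real \<Rightarrow> real \<Rightarrow> complex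
                   \<Rightarrow> complex \<Rightarrow> complex \<Rightarrow> complex \<Rightarrow> complex \<Rightarrow> complex" where
  "prE V Q t x \<psi> \<psi>t \<psi>x \<psi>tx \<psi>xx =
    (let p = (t, x, \<psi>); \<tau> = cf_tau Q; \<xi> = cf_xi Q; \<eta> = cf_eta Q;
         \<phi>t = Tot_t \<eta> p \<psi>t - of_real (Tot_t \<tau> p \<psi>t) * \<psi>t - of_real (Tot_t \<xi> p \<psi>t) * \<psi>x;
         \<phi>xx = Tot_xx \<eta> p \<psi>x \<psi>xx - of_real (Tot_xx \<tau> p \<psi>x \<psi>xx) * \<psi>t
               - 2 * of_real (Tot_x \<tau> p \<psi>x) * \<psi>tx
               - of_real (Tot_xx \<xi> p \<psi>x \<psi>xx) * \<psi>x
               - 2 * of_real (Tot_x \<xi> p \<psi>x) * \<psi>xx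
     in \<i> * \<phi>t + \<phi>xx
        + (of_real (\<tau> p) * dd V (t, x) (1, 0) + of_real (\<xi> p) * dd V (t, x) (0, 1)) * \<psi>
        + V (t, x) * \<eta> p)"

text \<open>Infinitesimal invariance criterion: pr^(2) Q (E) vanishes on the manifold E = 0
 (the conjugate equation gives the conjugate condition, since eta* = conj eta).\<close>

definition lie_sym :: "(real \<times> real \<Rightarrow> complex) \<Rightarrow> (real \<times> real) set \<Rightarrow> vfield \<Rightarrow> bool" where
  "lie_sym V \<Omega> Q \<longleftrightarrow>
     (\<forall>t x \<psi> \<psi>t \<psi>x \<psi>tx \<psi>xx. (t, x) \<in> \<Omega> \<longrightarrow> \<i> * \<psi>t + \<psi>xx + V (t, x) * \<psi> = 0
        \<longrightarrow> prE V Q t x \<psi> \<psi>t \<psi>x \<psi>tx \<psi>xx = 0)"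

text \<open>Maximal Lie invariance algebra g_V (locally, on the domain Omega x C):
 smooth vector fields on Omega x C (identified with their zero extension).\<close>

definition sym_alg :: "(real \<times> real \<Rightarrow> complex) \<Rightarrow> (real \<times> real) set \<Rightarrow> vfield set" where
  "sym_alg V \<Omega> = {Q. smooth_on (vf_dom \<Omega>) Q \<and> (\<forall>p. p \<notin> vf_dom \<Omega> \<longrightarrow> Q p = 0) \<and> lie_sym V \<Omega> Q}"

definition loc :: "(real \<times> real) set \<Rightarrow> vfield \<Rightarrow> vfield" where
  "loc \<Omega> Q = (\<lambda>p. if p \<in> vf_dom \<Omega> then Q p else 0)"

definition vD :: "(real \<Rightarrow> real) \<Rightarrow> vfield" where
  "vD \<tau> = (\<lambda>(t, x, \<psi>). (\<tau> t, deriv \<tau> t * x / 2,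
                         \<i> * of_real (deriv (deriv \<tau>) t * x\<^sup>2 / 8) * \<psi>))"

definition vG :: "(real \<Rightarrow> real) \<Rightarrow> vfield" where
  "vG chi = (\<lambda>(t, x, \<psi>). (0, chi t, \<i> * of_real (deriv chi t * x / 2) * \<psi>))"

definition vM :: "(real \<Rightarrow> real) \<Rightarrow> vfield" where
  "vM \<sigma> = (\<lambda>(t, x, \<psi>). (0, 0, \<i> * of_real (\<sigma> t) * \<psi>))"

definition vI :: "(real \<Rightarrow> real) \<Rightarrow> vfield" where
  "vI \<rho> = (\<lambda>(t, x, \<psi>). (0, 0, of_real (\<rho> t) * \<psi>))"

definition span_DGMI :: "(real \<times> real) set \<Rightarrow> vfield set" where
  "span_DGMI \<Omega> = {loc \<Omega> (vD \<tau> + vG chi + vM \<sigma> + vI \<rho>) | \<tau> chi \<sigma> \<rho>.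
      smooth_on (fst ` \<Omega>) \<tau> \<and> smooth_on (fst ` \<Omega>) chi \<and> smooth_on (fst ` \<Omega>) \<sigma> \<and> smooth_on (fst ` \<Omega>) \<rho>}"

definition span_GMI :: "(real \<times> real) set \<Rightarrow> vfield set" where
  "span_GMI \<Omega> = {loc \<Omega> (vG chi + vM \<sigma> + vI \<rho>) | chi \<sigma> \<rho>.
      smooth_on (fst ` \<Omega>) chi \<and> smooth_on (fst ` \<Omega>) \<sigma> \<and> smooth_on (fst ` \<Omega>) \<rho>}"

definition ess_alg :: "(real \<times> real \<Rightarrow> complex) \<Rightarrow> (real \<times> real) set \<Rightarrow> vfield set" where
  "ess_alg V \<Omega> = sym_alg V \<Omega> \<inter> span_DGMI \<Omega>"

definition vf_dim :: "vfield set \<Rightarrow> nat" where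
  "vf_dim S = vector_space.dim vscale S"

end

theory Submission
  imports Defs
begin

text \<open>A field \<open>G(\<chi>) + \<sigma>M + \<rho>I\<close> is a symmetry iff
  \<open>\<chi> V\<^sub>x = \<chi>'' x/2 + \<sigma>' - i\<rho>'\<close>. If every such \<open>\<chi>\<close> vanishes, \<open>\<sigma>\<close> and \<open>\<rho>\<close> are constant and only
  \<open>M\<close>, \<open>I\<close> remain. Otherwise pick \<open>\<chi>\<^sub>0 \<noteq> 0\<close>: by an energy estimate \<open>\<chi>\<^sub>0\<close> and \<open>\<chi>\<^sub>0'\<close> never vanish
  together, so \<open>\<chi>\<^sub>0 \<noteq> 0\<close> on a dense set, and comparing the equation at two abscissae shows
  \<open>V\<^sub>x = A(t) x + B(t)\<close> with \<open>A\<close> real. The equation then splits into \<open>\<chi>'' = 2A\<chi>\<close> and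
  \<open>\<sigma>' - i\<rho>' = \<chi>B\<close>: a two-dimensional space of \<open>\<chi>\<close>'s, each fixing \<open>\<sigma>, \<rho>\<close> up to constants,
  so the algebra is four-dimensional.\<close>

section \<open>Calculus of smooth maps\<close>

lemma iter_dd_snoc: "iter_dd f (hs @ [h]) = iter_dd (\<lambda>p. frechet_derivative f (at p) h) hs"
  by (induction hs) auto

definition smooth_upto :: "nat \<Rightarrow> 'a::real_normed_vector set \<Rightarrow> ('a \<Rightarrow> 'b::real_normed_vector) \<Rightarrow> bool" where
  "smooth_upto n S f \<longleftrightarrow> (\<forall>hs. length hs \<le> n \<longrightarrow> (\<forall>p\<in>S. iter_dd f hs differentiable (at p)))"

lemma smooth_on_iff_smooth_upto: "smooth_on S f \<longleftrightarrow> (\<forall>n. smooth_upto n S f)"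
  unfolding smooth_on_def smooth_upto_def by auto

lemma smooth_upto_0: "smooth_upto 0 S f \<longleftrightarrow> (\<forall>p\<in>S. f differentiable (at p))"
  unfolding smooth_upto_def by auto

lemma smooth_upto_Suc: "smooth_upto (Suc n) S f \<longleftrightarrow> (\<forall>p\<in>S. f differentiable (at p)) \<and>
   (\<forall>h. smooth_upto n S (\<lambda>p. frechet_derivative f (at p) h))"
proof
  assume a: "smooth_upto (Suc n) S f"
  show "(\<forall>p\<in>S. f differentiable (at p)) \<and> (\<forall>h. smooth_upto n S (\<lambda>p. frechet_derivative f (at p) h))"
  proof
    show "\<forall>p\<in>S. f differentiable (at p)" using a[unfolded smooth_upto_def, rule_format, of "[]"] by auto
    show "\<forall>h. smooth_upto n S (\<lambda>p. frechet_derivative f (at p) h)"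
      using a unfolding smooth_upto_def by (metis iter_dd_snoc length_append_singleton not_less_eq_eq)
  qed
next
  assume a: "(\<forall>p\<in>S. f differentiable (at p)) \<and> (\<forall>h. smooth_upto n S (\<lambda>p. frechet_derivative f (at p) h))"
  show "smooth_upto (Suc n) S f"
    unfolding smooth_upto_def
  proof (intro allI impI)
    fix hs :: "'a list" assume l: "length hs \<le> Suc n"
    show "\<forall>p\<in>S. iter_dd f hs differentiable at p"
    proof (cases "hs = []")
      case True then show ?thesis using a by simp
    next
      case False
      then obtain ks h where hs: "hs = ks @ [h]" by (metis rev_exhaust)
      with l have "length ks \<le> n" by simp
      then show ?thesis using a unfolding smooth_upto_def hs iter_dd_snoc by blast
    qed
  qed
qed

lemma smooth_upto_mono: "m \<le> n \<Longrightarrow> smooth_upto n S f \<Longrightarrow> smooth_upto m S f"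
  unfolding smooth_upto_def by auto

lemma smooth_on_subset: "smooth_on S f \<Longrightarrow> T \<subseteq> S \<Longrightarrow> smooth_on T f"
  unfolding smooth_on_def by auto

lemma frechet_derivative_eq: "(f has_derivative f') (at p) \<Longrightarrow> frechet_derivative f (at p) = f'"
  using frechet_derivative_at by metis

lemma has_derivative_cong_open:
  assumes "open U" "p \<in> U" "\<And>q. q \<in> U \<Longrightarrow> f q = g q"
  shows "(f has_derivative f') (at p) \<longleftrightarrow> (g has_derivative f') (at p)"
  using assms by (metis has_derivative_transform_within_open)

lemma frechet_derivative_cong_open:
  assumes "open U" "p \<in> U" "\<And>q. q \<in> U \<Longrightarrow> f q = g q"
  shows "frechet_derivative f (at p) = frechet_derivative g (at p)"
  unfolding frechet_derivative_def using has_derivative_cong_open[OF assms] by simp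

lemma differentiable_cong_open:
  assumes "open U" "p \<in> U" "\<And>q. q \<in> U \<Longrightarrow> f q = g q"
  shows "f differentiable (at p) \<longleftrightarrow> g differentiable (at p)"
  unfolding differentiable_def using has_derivative_cong_open[OF assms] by simp

lemma iter_dd_cong_open:
  assumes "open U" "\<And>q. q \<in> U \<Longrightarrow> f q = g q"
  shows "r \<in> U \<Longrightarrow> iter_dd f hs r = iter_dd g hs r"
proof (induction hs arbitrary: r)
  case Nil then show ?case using assms by simp
next
  case (Cons h hs)
  have "frechet_derivative (iter_dd f hs) (at r) = frechet_derivative (iter_dd g hs) (at r)"
    by (rule frechet_derivative_cong_open[OF assms(1) Cons.prems]) (use Cons.IH in auto)
  then show ?case by simp
qed

lemma smooth_upto_cong:
  assumes "open U" "S \<subseteq> U" "\<And>q. q \<in> U \<Longrightarrow> f q = g q" "smooth_upto n S f"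
  shows "smooth_upto n S g"
  unfolding smooth_upto_def
proof (intro allI impI ballI)
  fix hs :: "'a list" and p assume "length hs \<le> n" "p \<in> S"
  then have "iter_dd f hs differentiable (at p)" using assms(4) unfolding smooth_upto_def by auto
  moreover have "\<And>q. q \<in> U \<Longrightarrow> iter_dd f hs q = iter_dd g hs q"
    by (rule iter_dd_cong_open[OF assms(1)]) (use assms(3) in auto)
  ultimately show "iter_dd g hs differentiable (at p)"
    using differentiable_cong_open[OF assms(1)] \<open>p \<in> S\<close> assms(2) by blast
qed

lemma smooth_on_cong:
  assumes "open U" "S \<subseteq> U" "\<And>q. q \<in> U \<Longrightarrow> f q = g q" "smooth_on S f"
  shows "smooth_on S g"
  using smooth_upto_cong[OF assms(1,2), of f g] assms(3,4) unfolding smooth_on_iff_smooth_upto by blast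

lemma smooth_on_locally:
  assumes "\<And>p. p \<in> S \<Longrightarrow> \<exists>U g. open U \<and> p \<in> U \<and> smooth_on U g \<and> (\<forall>q\<in>U. f q = g q)"
  shows "smooth_on S f"
  unfolding smooth_on_def
proof (intro allI ballI)
  fix hs :: "'a list" and p assume p: "p \<in> S"
  obtain U g where U: "open U" "p \<in> U" "smooth_on U g" "\<forall>q\<in>U. f q = g q" using assms[OF p] by blast
  have "iter_dd g hs differentiable (at p)" using U unfolding smooth_on_def by blast
  moreover have "\<And>q. q \<in> U \<Longrightarrow> iter_dd f hs q = iter_dd g hs q"
    by (rule iter_dd_cong_open[OF U(1)]) (use U(4) in auto)
  ultimately show "iter_dd f hs differentiable (at p)" using differentiable_cong_open[OF U(1) U(2)] by blast
qed

lemma smooth_upto_const: "smooth_upto n S (\<lambda>p. c)"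
  by (induction n arbitrary: c) (simp_all add: smooth_upto_0 smooth_upto_Suc)

lemma smooth_on_const: "smooth_on S (\<lambda>p. c)"
  using smooth_upto_const smooth_on_iff_smooth_upto by blast

lemma smooth_on_imp_differentiable: "smooth_on S f \<Longrightarrow> p \<in> S \<Longrightarrow> f differentiable (at p)"
  unfolding smooth_on_def using iter_dd.simps(1) by metis

lemma smooth_on_frechet_derivative: "smooth_on S f \<Longrightarrow> smooth_on S (\<lambda>p. frechet_derivative f (at p) h)"
  unfolding smooth_on_iff_smooth_upto using smooth_upto_Suc by blast

lemma smooth_on_bounded_linear: "bounded_linear L \<Longrightarrow> smooth_on S L"
proof -
  assume L: "bounded_linear L"
  have "frechet_derivative L (at p) h = L h" for p h
    using frechet_derivative_eq[OF bounded_linear.has_derivative[OF L has_derivative_ident]] by simp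
  then have "smooth_upto n S L" for n
    using L by (cases n) (simp_all add: smooth_upto_0 smooth_upto_Suc bounded_linear_imp_differentiable smooth_upto_const)
  then show ?thesis by (simp add: smooth_on_iff_smooth_upto)
qed

lemma smooth_upto_SucI:
  assumes "open S" "\<And>p. p \<in> S \<Longrightarrow> f differentiable (at p)"
    and "\<And>h q. q \<in> S \<Longrightarrow> frechet_derivative f (at q) h = g h q" and "\<And>h. smooth_upto n S (g h)"
  shows "smooth_upto (Suc n) S f"
  unfolding smooth_upto_Suc
proof (intro conjI allI ballI)
  fix h
  show "smooth_upto n S (\<lambda>p. frechet_derivative f (at p) h)"
    by (rule smooth_upto_cong[OF assms(1) order_refl _ assms(4)]) (use assms(3) in auto)
qed (use assms(2) in auto)

lemma smooth_upto_differentiable: "smooth_upto n S f \<Longrightarrow> p \<in> S \<Longrightarrow> f differentiable (at p)"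
  by (cases n) (auto simp: smooth_upto_0 smooth_upto_Suc)

lemma smooth_upto_add:
  assumes "open S"
  shows "smooth_upto n S f \<Longrightarrow> smooth_upto n S g \<Longrightarrow> smooth_upto n S (\<lambda>p. f p + g p)"
proof (induction n arbitrary: f g)
  case 0 then show ?case by (auto simp: smooth_upto_0)
next
  case (Suc n)
  note d = smooth_upto_differentiable[OF Suc.prems(1)] smooth_upto_differentiable[OF Suc.prems(2)]
  show ?case
  proof (rule smooth_upto_SucI[OF assms])
    fix h q assume "q \<in> S"
    then have "((\<lambda>p. f p + g p) has_derivative (\<lambda>h. frechet_derivative f (at q) h + frechet_derivative g (at q) h)) (at q)"
      using d by (intro has_derivative_add) (simp_all add: frechet_derivative_works[symmetric])
    then show "frechet_derivative (\<lambda>p. f p + g p) (at q) h = frechet_derivative f (at q) h + frechet_derivative g (at q) h"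
      by (simp add: frechet_derivative_eq)
  next
    show "smooth_upto n S (\<lambda>q. frechet_derivative f (at q) h + frechet_derivative g (at q) h)" for h
      using Suc.IH Suc.prems by (auto simp: smooth_upto_Suc)
  qed (use d in auto)
qed

lemma smooth_upto_mult:
  fixes f g :: "'a::real_normed_vector \<Rightarrow> 'b::real_normed_algebra"
  assumes "open S"
  shows "smooth_upto n S f \<Longrightarrow> smooth_upto n S g \<Longrightarrow> smooth_upto n S (\<lambda>p. f p * g p)"
proof (induction n arbitrary: f g)
  case 0 then show ?case by (auto simp: smooth_upto_0 intro: differentiable_mult)
next
  case (Suc n)
  note d = smooth_upto_differentiable[OF Suc.prems(1)] smooth_upto_differentiable[OF Suc.prems(2)]
  show ?case
  proof (rule smooth_upto_SucI[OF assms])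
    fix h q assume "q \<in> S"
    then have "((\<lambda>p. f p * g p) has_derivative
        (\<lambda>h. f q * frechet_derivative g (at q) h + frechet_derivative f (at q) h * g q)) (at q)"
      using d by (intro has_derivative_mult) (simp_all add: frechet_derivative_works[symmetric])
    then show "frechet_derivative (\<lambda>p. f p * g p) (at q) h =
        f q * frechet_derivative g (at q) h + frechet_derivative f (at q) h * g q"
      by (simp add: frechet_derivative_eq)
  next
    have m: "smooth_upto n S f" "smooth_upto n S g" using Suc.prems smooth_upto_mono[of n "Suc n"] by auto
    show "smooth_upto n S (\<lambda>q. f q * frechet_derivative g (at q) h + frechet_derivative f (at q) h * g q)" for h
      by (rule smooth_upto_add[OF assms]) (use Suc.IH Suc.prems m in \<open>auto simp: smooth_upto_Suc\<close>)
  qed (use d in \<open>auto intro: differentiable_mult\<close>)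
qed

lemma smooth_upto_compose_bounded_linear:
  assumes "open S" "bounded_linear L"
  shows "smooth_upto n S f \<Longrightarrow> smooth_upto n S (\<lambda>p. L (f p))"
proof (induction n arbitrary: f)
  have dL: "\<And>q. L differentiable (at q)" using assms(2) bounded_linear_imp_differentiable by blast
  {
    case 0 then show ?case using dL
      by (auto simp: smooth_upto_0 intro: differentiable_compose[of L, unfolded o_def])
  next
    case (Suc n)
    note d = smooth_upto_differentiable[OF Suc.prems]
    show ?case
    proof (rule smooth_upto_SucI[OF assms(1)])
      fix h q assume "q \<in> S"
      then have "((\<lambda>p. L (f p)) has_derivative (\<lambda>h. L (frechet_derivative f (at q) h))) (at q)"
        using d bounded_linear.has_derivative[OF assms(2)] frechet_derivative_works by blast
      then show "frechet_derivative (\<lambda>p. L (f p)) (at q) h = L (frechet_derivative f (at q) h)"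
        by (simp add: frechet_derivative_eq)
    next
      show "smooth_upto n S (\<lambda>q. L (frechet_derivative f (at q) h))" for h
        using Suc.IH Suc.prems by (auto simp: smooth_upto_Suc)
    qed (use d dL in \<open>auto intro: differentiable_compose[of L, unfolded o_def]\<close>)
  }
qed

lemma smooth_upto_vimage_affine:
  assumes "open S" "bounded_linear L"
  shows "smooth_upto n S f \<Longrightarrow> smooth_upto n ((\<lambda>p. L p + a) -` S) (\<lambda>p. f (L p + a))"
proof (induction n arbitrary: f)
  have hL: "((\<lambda>p. L p + a) has_derivative L) (at q)" for q
    using has_derivative_add_const[OF bounded_linear.has_derivative[OF assms(2) has_derivative_ident]] by simp
  have df: "(\<lambda>p. f (L p + a)) differentiable (at p)" if "f differentiable (at (L p + a))" for f p
    using that diff_chain_at[OF hL] by (auto simp: differentiable_def o_def)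
  {
    case 0 then show ?case using df by (auto simp: smooth_upto_0)
  next
    case (Suc n)
    have op: "open ((\<lambda>p. L p + a) -` S)"
      by (intro continuous_open_vimage[OF assms(1)] continuous_add linear_continuous_at[OF assms(2)] continuous_const)
    note d = smooth_upto_differentiable[OF Suc.prems]
    show ?case
    proof (rule smooth_upto_SucI[OF op])
      fix h q assume "q \<in> (\<lambda>p. L p + a) -` S"
      then have "((\<lambda>p. f (L p + a)) has_derivative (\<lambda>h. frechet_derivative f (at (L q + a)) (L h))) (at q)"
        using d diff_chain_at[OF hL[of q], of f] by (auto simp: frechet_derivative_works o_def)
      then show "frechet_derivative (\<lambda>p. f (L p + a)) (at q) h = frechet_derivative f (at (L q + a)) (L h)"
        by (simp add: frechet_derivative_eq)
    next
      show "smooth_upto n ((\<lambda>p. L p + a) -` S) (\<lambda>q. frechet_derivative f (at (L q + a)) (L h))" for h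
        using Suc.IH Suc.prems by (auto simp: smooth_upto_Suc)
    qed (use d df in auto)
  }
qed

lemma smooth_upto_Pair:
  assumes "open S"
  shows "smooth_upto n S f \<Longrightarrow> smooth_upto n S g \<Longrightarrow> smooth_upto n S (\<lambda>p. (f p, g p))"
proof (induction n arbitrary: f g)
  case 0 then show ?case by (simp add: smooth_upto_0 differentiable_def) (metis has_derivative_Pair)
next
  case (Suc n)
  note d = smooth_upto_differentiable[OF Suc.prems(1)] smooth_upto_differentiable[OF Suc.prems(2)]
  show ?case
  proof (rule smooth_upto_SucI[OF assms])
    fix p assume "p \<in> S" then show "(\<lambda>p. (f p, g p)) differentiable (at p)"
      using d by (simp add: differentiable_def) (metis has_derivative_Pair)
  next
    fix h q assume "q \<in> S"
    then have "((\<lambda>p. (f p, g p)) has_derivative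
        (\<lambda>h. (frechet_derivative f (at q) h, frechet_derivative g (at q) h))) (at q)"
      using d by (intro has_derivative_Pair) (simp_all add: frechet_derivative_works[symmetric])
    then show "frechet_derivative (\<lambda>p. (f p, g p)) (at q) h = (frechet_derivative f (at q) h, frechet_derivative g (at q) h)"
      by (simp add: frechet_derivative_eq)
  next
    show "smooth_upto n S (\<lambda>q. (frechet_derivative f (at q) h, frechet_derivative g (at q) h))" for h
      using Suc.IH Suc.prems by (auto simp: smooth_upto_Suc)
  qed
qed

lemma smooth_upto_inverse:
  fixes f :: "'a::real_normed_vector \<Rightarrow> 'b::real_normed_field"
  assumes "open S" "\<And>p. p \<in> S \<Longrightarrow> f p \<noteq> 0"
  shows "smooth_upto n S f \<Longrightarrow> smooth_upto n S (\<lambda>p. inverse (f p))"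
proof (induction n)
  have di: "(\<lambda>p. inverse (f p)) differentiable at q" if "f differentiable at q" "q \<in> S" for q
    by (rule differentiable_inverse[OF that(1)]) (use assms(2) that in auto)
  {
    case 0 then show ?case using di by (auto simp: smooth_upto_0)
  next
    case (Suc n)
    note d = smooth_upto_differentiable[OF Suc.prems]
    show ?case
    proof (rule smooth_upto_SucI[OF assms(1)])
      fix h q assume q: "q \<in> S"
      then have "((\<lambda>p. inverse (f p)) has_derivative
          (\<lambda>h. - (inverse (f q) * frechet_derivative f (at q) h * inverse (f q)))) (at q)"
        using d assms(2) by (intro Deriv.has_derivative_inverse) (simp_all add: frechet_derivative_works[symmetric])
      then show "frechet_derivative (\<lambda>p. inverse (f p)) (at q) h =
          - (inverse (f q) * frechet_derivative f (at q) h * inverse (f q))"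
        by (simp add: frechet_derivative_eq)
    next
      fix h
      have i: "smooth_upto n S (\<lambda>p. inverse (f p))"
        using Suc.IH Suc.prems smooth_upto_mono[of n "Suc n"] by auto
      have "smooth_upto n S (\<lambda>q. frechet_derivative f (at q) h)" using Suc.prems by (auto simp: smooth_upto_Suc)
      then show "smooth_upto n S (\<lambda>q. - (inverse (f q) * frechet_derivative f (at q) h * inverse (f q)))"
        using smooth_upto_compose_bounded_linear[OF assms(1) bounded_linear_minus[OF bounded_linear_ident],
            OF smooth_upto_mult[OF assms(1) smooth_upto_mult[OF assms(1) i] i]] by simp
    qed (use d di in auto)
  }
qed

lemma smooth_on_add:
  "open S \<Longrightarrow> smooth_on S f \<Longrightarrow> smooth_on S g \<Longrightarrow> smooth_on S (\<lambda>p. f p + g p)"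
  by (simp add: smooth_on_iff_smooth_upto smooth_upto_add)

lemma smooth_on_mult:
  fixes f g :: "'a::real_normed_vector \<Rightarrow> 'b::real_normed_algebra"
  shows "open S \<Longrightarrow> smooth_on S f \<Longrightarrow> smooth_on S g \<Longrightarrow> smooth_on S (\<lambda>p. f p * g p)"
  by (simp add: smooth_on_iff_smooth_upto smooth_upto_mult)

lemma smooth_on_compose_bounded_linear:
  "open S \<Longrightarrow> bounded_linear L \<Longrightarrow> smooth_on S f \<Longrightarrow> smooth_on S (\<lambda>p. L (f p))"
  by (simp add: smooth_on_iff_smooth_upto smooth_upto_compose_bounded_linear)

lemma smooth_on_vimage_affine:
  "open S \<Longrightarrow> bounded_linear L \<Longrightarrow> smooth_on S f \<Longrightarrow> smooth_on ((\<lambda>p. L p + a) -` S) (\<lambda>p. f (L p + a))"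
  by (simp add: smooth_on_iff_smooth_upto smooth_upto_vimage_affine)

lemma smooth_on_vimage_bounded_linear:
  "open S \<Longrightarrow> bounded_linear L \<Longrightarrow> smooth_on S f \<Longrightarrow> smooth_on (L -` S) (\<lambda>p. f (L p))"
  using smooth_on_vimage_affine[of S L f 0] by simp

lemma smooth_on_Pair:
  "open S \<Longrightarrow> smooth_on S f \<Longrightarrow> smooth_on S g \<Longrightarrow> smooth_on S (\<lambda>p. (f p, g p))"
  by (simp add: smooth_on_iff_smooth_upto smooth_upto_Pair)

lemma smooth_on_inverse:
  fixes f :: "'a::real_normed_vector \<Rightarrow> 'b::real_normed_field"
  shows "open S \<Longrightarrow> (\<And>p. p \<in> S \<Longrightarrow> f p \<noteq> 0) \<Longrightarrow> smooth_on S f \<Longrightarrow> smooth_on S (\<lambda>p. inverse (f p))"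
  by (simp add: smooth_on_iff_smooth_upto smooth_upto_inverse)

lemma smooth_on_uminus: "open S \<Longrightarrow> smooth_on S f \<Longrightarrow> smooth_on S (\<lambda>p. - f p)"
  by (rule smooth_on_compose_bounded_linear[OF _ bounded_linear_minus[OF bounded_linear_ident]])

lemma smooth_on_imp_DERIV:
  fixes f :: "real \<Rightarrow> real"
  shows "smooth_on S f \<Longrightarrow> u \<in> S \<Longrightarrow> (f has_real_derivative deriv f u) (at u)"
  using smooth_on_imp_differentiable DERIV_deriv_iff_real_differentiable by blast

lemma smooth_on_imp_continuous_on: "smooth_on S f \<Longrightarrow> continuous_on S f" for f :: "real \<Rightarrow> real"
  by (meson continuous_at_imp_continuous_on differentiable_imp_continuous_within smooth_on_imp_differentiable)

lemma smooth_on_deriv: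
  fixes f :: "real \<Rightarrow> real"
  assumes "open S" "smooth_on S f"
  shows "smooth_on S (deriv f)"
proof -
  have "frechet_derivative f (at p) 1 = deriv f p" if "p \<in> S" for p
    using frechet_derivative_eq[OF smooth_on_imp_DERIV[OF assms(2) that, unfolded has_field_derivative_def]]
    by simp
  then show ?thesis
    using smooth_on_cong[OF assms(1) order_refl, of "\<lambda>p. frechet_derivative f (at p) 1" "deriv f"]
      smooth_on_frechet_derivative[OF assms(2)] by auto
qed

lemma smooth_on_antiderivative:
  fixes F f :: "real \<Rightarrow> real"
  assumes "open S" "\<And>p. p \<in> S \<Longrightarrow> (F has_real_derivative f p) (at p)" "smooth_on S f"
  shows "smooth_on S F"
  unfolding smooth_on_iff_smooth_upto
proof
  fix n show "smooth_upto n S F"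
  proof (cases n)
    case 0 then show ?thesis using assms(2) by (auto simp: smooth_upto_0 real_differentiable_def)
  next
    case (Suc m)
    have "smooth_upto m S (\<lambda>p. h * f p)" for h
      using smooth_on_mult[OF assms(1) smooth_on_const assms(3)] by (simp add: smooth_on_iff_smooth_upto)
    moreover have "frechet_derivative F (at p) h = h * f p" if "p \<in> S" for p h
      using frechet_derivative_eq[OF assms(2)[OF that, unfolded has_field_derivative_def]] by simp
    ultimately show ?thesis unfolding Suc
      by (intro smooth_upto_SucI[OF assms(1)]) (auto simp: real_differentiable_def intro: assms(2))
  qed
qed

lemma gronwall_zero_right:
  fixes E E' :: "real \<Rightarrow> real"
  assumes "t0 \<le> t" and dE: "\<And>s. t0 \<le> s \<Longrightarrow> s \<le> t \<Longrightarrow> (E has_real_derivative E' s) (at s)"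
    and bound: "\<And>s. t0 \<le> s \<Longrightarrow> s \<le> t \<Longrightarrow> E' s \<le> L * E s"
    and "E t0 = 0" "E t \<ge> 0"
  shows "E t = 0"
proof -
  define G where "G s = E s * exp (- (L * s))" for s
  have "G t \<le> G t0"
  proof (rule DERIV_nonpos_imp_nonincreasing[OF \<open>t0 \<le> t\<close>])
    fix s assume s: "t0 \<le> s" "s \<le> t"
    have "(G has_real_derivative (E' s - L * E s) * exp (- (L * s))) (at s)"
      unfolding G_def by (rule derivative_eq_intros dE[OF s] refl | simp add: algebra_simps)+
    moreover have "(E' s - L * E s) * exp (- (L * s)) \<le> 0"
      using bound[OF s] by (simp add: mult_nonpos_nonneg)
    ultimately show "\<exists>y. (G has_real_derivative y) (at s) \<and> y \<le> 0" by blast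
  qed
  then show ?thesis using assms(4,5) by (simp add: G_def mult_le_0_iff)
qed

lemma gronwall_zero:
  fixes E E' :: "real \<Rightarrow> real"
  assumes dE: "\<And>s. a \<le> s \<Longrightarrow> s \<le> b \<Longrightarrow> (E has_real_derivative E' s) (at s)"
    and bound: "\<And>s. a \<le> s \<Longrightarrow> s \<le> b \<Longrightarrow> \<bar>E' s\<bar> \<le> L * E s"
    and nonneg: "\<And>s. E s \<ge> 0" and "a \<le> t0" "t0 \<le> b" "E t0 = 0" and "a \<le> t" "t \<le> b"
  shows "E t = 0"
proof (cases "t0 \<le> t")
  case True
  have "E' s \<le> L * E s" if "t0 \<le> s" "s \<le> t" for s
    using bound[of s] that assms(4,8) by fastforce
  then show ?thesis
    by (intro gronwall_zero_right[OF True, where E=E and E'=E' and L=L]) (use assms in auto)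
next
  case False
  have ab: "a \<le> - s" "- s \<le> b" if "- t0 \<le> s" "s \<le> - t" for s
    using that assms(5,7) by linarith+
  have "E (- (- t)) = 0"
  proof (rule gronwall_zero_right[where E="\<lambda>s. E (- s)" and E'="\<lambda>s. - E' (- s)" and L=L])
    show "- t0 \<le> - t" using False by simp
    fix s assume s: "- t0 \<le> s" "s \<le> - t"
    show "((\<lambda>s. E (- s)) has_real_derivative - E' (- s)) (at s)"
      using DERIV_chain2[OF dE[OF ab[OF s]] DERIV_minus[OF DERIV_ident]] by simp
    show "- E' (- s) \<le> L * E (- s)"
      using bound[OF ab[OF s]] by linarith
  qed (use assms(6) nonneg in auto)
  then show ?thesis by simp
qed

lemma second_order_zero_uniqueness:
  fixes y y' y'' :: "real \<Rightarrow> real"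
  assumes d1: "\<And>t. a \<le> t \<Longrightarrow> t \<le> b \<Longrightarrow> (y has_real_derivative y' t) (at t)"
    and d2: "\<And>t. a \<le> t \<Longrightarrow> t \<le> b \<Longrightarrow> (y' has_real_derivative y'' t) (at t)"
    and bd: "\<And>t. a \<le> t \<Longrightarrow> t \<le> b \<Longrightarrow> \<bar>y'' t\<bar> \<le> K * \<bar>y t\<bar>"
    and "a \<le> t0" "t0 \<le> b" "y t0 = 0" "y' t0 = 0"
    and "a \<le> t" "t \<le> b"
  shows "y t = 0"
proof -
  define L where "L = 1 + \<bar>K\<bar>"
  \<comment> \<open>Gronwall for the energy \<open>y\<^sup>2 + y'\<^sup>2\<close>\<close>
  define E where "E t = (y t)\<^sup>2 + (y' t)\<^sup>2" for t
  define E' where "E' t = 2 * y t * y' t + 2 * y' t * y'' t" for t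
  have dE: "(E has_real_derivative E' t) (at t)" if "a \<le> t" "t \<le> b" for t
    unfolding E_def E'_def by (rule derivative_eq_intros d1 d2 that refl | simp)+
  have bE: "\<bar>E' t\<bar> \<le> L * E t" if "a \<le> t" "t \<le> b" for t
  proof -
    have amgm: "2 * \<bar>y t\<bar> * \<bar>y' t\<bar> \<le> (y t)\<^sup>2 + (y' t)\<^sup>2"
      using sum_squares_bound[of "\<bar>y t\<bar>" "\<bar>y' t\<bar>"] by (simp add: power2_eq_square)
    have "\<bar>E' t\<bar> \<le> 2 * \<bar>y t\<bar> * \<bar>y' t\<bar> + 2 * \<bar>y' t\<bar> * \<bar>y'' t\<bar>"
      unfolding E'_def using abs_triangle_ineq[of "2 * y t * y' t" "2 * y' t * y'' t"] by (simp add: abs_mult)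
    also have "\<dots> \<le> 2 * \<bar>y t\<bar> * \<bar>y' t\<bar> + 2 * \<bar>y' t\<bar> * (\<bar>K\<bar> * \<bar>y t\<bar>)"
    proof -
      have "K * \<bar>y t\<bar> \<le> \<bar>K\<bar> * \<bar>y t\<bar>" by (intro mult_right_mono) auto
      then show ?thesis using bd[OF that] by (intro add_left_mono mult_left_mono) auto
    qed
    also have "\<dots> = (1 + \<bar>K\<bar>) * (2 * \<bar>y t\<bar> * \<bar>y' t\<bar>)" by (simp add: algebra_simps)
    also have "\<dots> \<le> L * E t" unfolding L_def E_def using amgm by (intro mult_left_mono) auto
    finally show ?thesis .
  qed
  have "E t = 0"
    by (rule gronwall_zero[of a b E E' L t0 t])
      (use dE bE assms in \<open>auto simp: E_def\<close>)
  then show ?thesis unfolding E_def by (simp add: add_nonneg_eq_0_iff)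
qed

lemma connected_open_has_antiderivative:
  fixes g :: "real \<Rightarrow> real"
  assumes T: "open T" "connected T" and g: "continuous_on T g"
  shows "\<exists>G. \<forall>t\<in>T. (G has_real_derivative g t) (at t)"
proof (cases "T = {}")
  case True then show ?thesis by simp
next
  case False
  define a where "a = Inf (ereal ` T)"
  define b where "b = Sup (ereal ` T)"
  have iv: "is_interval T" using T(2) by (simp add: is_interval_connected_1)
  have Teq: "T = {x. a < ereal x \<and> ereal x < b}"
  proof (intro set_eqI iffI)
    fix x assume x: "x \<in> T"
    obtain e where e: "e > 0" "ball x e \<subseteq> T" using T(1) x open_contains_ball by blast
    have "x - e/2 \<in> T" "x + e/2 \<in> T" using e by (auto simp: dist_real_def subset_iff)
    then have "a \<le> ereal (x - e/2)" "ereal (x + e/2) \<le> b" unfolding a_def b_def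
      by (auto intro: Inf_lower Sup_upper)
    moreover have "ereal (x - e/2) < ereal x" "ereal x < ereal (x + e/2)" using e by auto
    ultimately have "a < ereal x" "ereal x < b" by (meson order.strict_trans1 order.strict_trans2)+
    then show "x \<in> {x. a < ereal x \<and> ereal x < b}" by auto
  next
    fix x assume "x \<in> {x. a < ereal x \<and> ereal x < b}"
    then have "Inf (ereal ` T) < ereal x" "ereal x < Sup (ereal ` T)" by (auto simp: a_def b_def)
    then obtain y z where "y \<in> T" "ereal y < ereal x" "z \<in> T" "ereal x < ereal z"
      by (auto simp: Inf_less_iff less_Sup_iff)
    then show "x \<in> T" using iv unfolding is_interval_1 by (metis ereal_less_eq(3) less_imp_le)
  qed
  obtain x0 where "x0 \<in> T" using False by blast
  then have ab: "a < b" using Teq by (auto dest: order.strict_trans)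
  have "\<exists>F. \<forall>x :: real. a < x \<longrightarrow> x < b \<longrightarrow> (F has_vector_derivative g x) (at x)"
  proof (rule einterval_antiderivative[OF ab])
    fix x :: real assume "a < ereal x" "ereal x < b"
    then have "x \<in> T" using Teq by auto
    then show "isCont g x" using g T(1) continuous_on_eq_continuous_at by blast
  qed
  then show ?thesis using Teq by (auto simp: has_real_derivative_iff_has_vector_derivative)
qed

lemma DERIV_zero_open_connected_constant:
  fixes f :: "real \<Rightarrow> real"
  assumes "connected S" "open S" "\<And>t. t \<in> S \<Longrightarrow> (f has_real_derivative 0) (at t)"
  obtains c where "\<And>t. t \<in> S \<Longrightarrow> f t = c"
proof -
  have "continuous_on S f" using assms(3) by (metis DERIV_isCont continuous_at_imp_continuous_on)
  then show ?thesis
    using DERIV_zero_connected_constant[OF assms(1,2) finite.emptyI, of f] assms(3) that by blast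
qed

lemma deriv_zero_if_zero_on_open:
  fixes f :: "real \<Rightarrow> real"
  assumes "open S" "\<And>t. t \<in> S \<Longrightarrow> f t = 0" "t \<in> S"
  shows "deriv f t = 0"
proof -
  have "((\<lambda>_. 0) has_real_derivative 0) (at t)" by simp
  then have "(f has_real_derivative 0) (at t)"
    by (rule has_field_derivative_transform_within_open[OF _ assms(1,3)]) (use assms(2) in auto)
  then show ?thesis by (rule DERIV_imp_deriv)
qed

lemma isCont_zero_if_zeros_arbitrarily_close:
  fixes g :: "real \<Rightarrow> 'a::real_normed_vector"
  assumes c: "isCont g t0" and d: "\<And>e. e > 0 \<Longrightarrow> \<exists>t. \<bar>t - t0\<bar> < e \<and> g t = 0"
  shows "g t0 = 0"
proof (rule ccontr)
  assume ne: "g t0 \<noteq> 0"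
  obtain dl where dl: "dl > 0" "\<forall>t. dist t t0 < dl \<longrightarrow> dist (g t) (g t0) < norm (g t0)"
    using c ne unfolding continuous_at_eps_delta by (meson zero_less_norm_iff)
  obtain t where "\<bar>t - t0\<bar> < dl" "g t = 0" using d[OF dl(1)] by blast
  then show False using dl(2) by (auto simp: dist_real_def)
qed

lemma connected_common_zeros_open_imp_everywhere:
  fixes f g :: "real \<Rightarrow> real"
  assumes T: "connected T" and f: "continuous_on T f" and g: "continuous_on T g"
    and op: "open {t\<in>T. f t = 0 \<and> g t = 0}" and ne: "t0 \<in> T" "f t0 = 0" "g t0 = 0"
  shows "\<forall>t\<in>T. f t = 0 \<and> g t = 0"
proof -
  let ?Z = "{t\<in>T. f t = 0 \<and> g t = 0}"
  have "closedin (top_of_set T) ({t\<in>T. f t = 0} \<inter> {t\<in>T. g t = 0})"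
    by (intro closedin_Int continuous_closedin_preimage_constant f g)
  moreover have "{t\<in>T. f t = 0} \<inter> {t\<in>T. g t = 0} = ?Z" by auto
  ultimately have cl: "closedin (top_of_set T) ?Z" by simp
  have opi: "openin (top_of_set T) ?Z" using op by (auto simp: openin_open intro!: exI[of _ ?Z])
  have "?Z = {} \<or> ?Z = T" using T cl opi unfolding connected_clopen by blast
  then show ?thesis using ne by auto
qed

lemma unimodular_kernel_zero:
  fixes p q r s x y :: real
  assumes "p * s - q * r = 1" "p * x + q * y = 0" "r * x + s * y = 0"
  shows "x = 0" "y = 0"
proof -
  have "x = x * (p * s - q * r)" using assms(1) by simp
  also have "\<dots> = s * (p * x + q * y) - q * (r * x + s * y)" by (simp add: algebra_simps)
  finally show "x = 0" using assms(2,3) by simp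
  have "y = y * (p * s - q * r)" using assms(1) by simp
  also have "\<dots> = p * (r * x + s * y) - r * (p * x + q * y)" by (simp add: algebra_simps)
  finally show "y = 0" using assms(2,3) by simp
qed

section \<open>The determining equations for \<open>G(\<chi>) + \<sigma>M + \<rho>I\<close>\<close>

lemma open_vf_dom: "open \<Omega> \<Longrightarrow> open (vf_dom \<Omega>)"
proof -
  assume o: "open \<Omega>"
  have "vf_dom \<Omega> = (\<lambda>q. (fst q, fst (snd q))) -` \<Omega>" by (auto simp: vf_dom_def)
  moreover have "open ((\<lambda>q::pt. (fst q, fst (snd q))) -` \<Omega>)"
    by (rule continuous_open_vimage[OF o]) (intro continuous_intros)
  ultimately show ?thesis by simp
qed

lemma vf_dom_iff: "q \<in> vf_dom \<Omega> \<longleftrightarrow> (fst q, fst (snd q)) \<in> \<Omega>"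
  by (cases q) (auto simp: vf_dom_def)

lemma fst_mem_fst_image_vf_dom: "q \<in> vf_dom \<Omega> \<Longrightarrow> fst q \<in> fst ` \<Omega>"
  unfolding vf_dom_iff by (metis fst_conv image_eqI)

definition gmi_field :: "(real \<times> real) set \<Rightarrow> (real \<Rightarrow> real) \<Rightarrow> (real \<Rightarrow> real) \<Rightarrow> (real \<Rightarrow> real) \<Rightarrow> vfield" where
  "gmi_field \<Omega> chi \<sigma> \<rho> = loc \<Omega> (vG chi + vM \<sigma> + vI \<rho>)"

definition gmi_factor :: "(real \<Rightarrow> real) \<Rightarrow> (real \<Rightarrow> real) \<Rightarrow> (real \<Rightarrow> real) \<Rightarrow> pt \<Rightarrow> complex" where
  "gmi_factor c \<sigma> \<rho> q = \<i> * of_real (c (fst q) * fst (snd q) / 2) + \<i> * of_real (\<sigma> (fst q)) + of_real (\<rho> (fst q))"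

definition gmi_factor_deriv :: "(real \<Rightarrow> real) \<Rightarrow> (real \<Rightarrow> real) \<Rightarrow> (real \<Rightarrow> real) \<Rightarrow> pt \<Rightarrow> pt \<Rightarrow> complex" where
  "gmi_factor_deriv c \<sigma> \<rho> q h =
     \<i> * of_real (deriv c (fst q) * fst h * fst (snd q) / 2 + c (fst q) * fst (snd h) / 2)
     + \<i> * of_real (deriv \<sigma> (fst q) * fst h) + of_real (deriv \<rho> (fst q) * fst h)"

lemma gmi_field_eq:
  "gmi_field \<Omega> chi \<sigma> \<rho> q =
     (if q \<in> vf_dom \<Omega> then (0, chi (fst q), gmi_factor (deriv chi) \<sigma> \<rho> q * snd (snd q)) else 0)"
  by (cases q) (simp add: gmi_field_def loc_def vG_def vM_def vI_def gmi_factor_def plus_fun_def algebra_simps)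

lemma gmi_field_apply:
  "(t, x) \<in> \<Omega> \<Longrightarrow> gmi_field \<Omega> chi \<sigma> \<rho> (t, x, \<psi>) = (0, chi t, gmi_factor (deriv chi) \<sigma> \<rho> (t, x, \<psi>) * \<psi>)"
  by (simp add: gmi_field_eq vf_dom_def)

lemma has_derivative_fst_compose:
  fixes g :: "real \<Rightarrow> real" and q :: "real \<times> 'b::real_normed_vector"
  assumes "(g has_real_derivative D) (at (fst q))"
  shows "((\<lambda>q. g (fst q)) has_derivative (\<lambda>h. D * fst h)) (at q)"
  using has_derivative_compose[OF has_derivative_fst[OF has_derivative_ident] assms[unfolded has_field_derivative_def]]
  by (simp add: mult.commute)

lemma has_derivative_gmi_factor:
  assumes "(c has_real_derivative deriv c (fst q)) (at (fst q))"
    and "(\<sigma> has_real_derivative deriv \<sigma> (fst q)) (at (fst q))"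
    and "(\<rho> has_real_derivative deriv \<rho> (fst q)) (at (fst q))"
  shows "(gmi_factor c \<sigma> \<rho> has_derivative gmi_factor_deriv c \<sigma> \<rho> q) (at q)"
  unfolding gmi_factor_def gmi_factor_deriv_def
  apply (rule derivative_eq_intros has_derivative_fst_compose[OF assms(1)]
      has_derivative_fst_compose[OF assms(2)] has_derivative_fst_compose[OF assms(3)] refl | simp)+
  apply (simp add: fun_eq_iff field_simps)
  done

lemma dd_cong_open: "open U \<Longrightarrow> p \<in> U \<Longrightarrow> (\<And>q. q \<in> U \<Longrightarrow> F q = G q) \<Longrightarrow> dd F p h = dd G p h"
  unfolding dd_def using frechet_derivative_cong_open by metis

lemma dd_eq: "(F has_derivative F') (at p) \<Longrightarrow> dd F p h = F' h"
  unfolding dd_def using frechet_derivative_eq by metis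

lemma dd2_eq:
  assumes "open U" "p \<in> U" "\<And>q. q \<in> U \<Longrightarrow> dd F q h = G q" "(G has_derivative G') (at p)"
  shows "dd2 F p h k = G' k"
proof -
  have "frechet_derivative (\<lambda>q. dd F q h) (at p) = frechet_derivative G (at p)"
    by (rule frechet_derivative_cong_open[OF assms(1,2,3)])
  then show ?thesis unfolding dd2_def frechet_derivative_eq[OF assms(4)] by simp
qed

definition gmi_determining :: "(real \<times> real \<Rightarrow> complex) \<Rightarrow> (real \<times> real) set
    \<Rightarrow> (real \<Rightarrow> real) \<Rightarrow> (real \<Rightarrow> real) \<Rightarrow> (real \<Rightarrow> real) \<Rightarrow> bool" where
  "gmi_determining V \<Omega> chi \<sigma> \<rho> \<longleftrightarrow> (\<forall>t x. (t, x) \<in> \<Omega> \<longrightarrow>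
     of_real (chi t) * dd V (t, x) (0, 1) = of_real (deriv (deriv chi) t * x / 2 + deriv \<sigma> t) - \<i> * of_real (deriv \<rho> t))"

context
  fixes \<Omega> :: "(real \<times> real) set" and chi \<sigma> \<rho> :: "real \<Rightarrow> real"
  assumes open_\<Omega>: "open \<Omega>"
    and smooth: "smooth_on (fst ` \<Omega>) chi" "smooth_on (fst ` \<Omega>) \<sigma>" "smooth_on (fst ` \<Omega>) \<rho>"
begin

private lemma open_fst_image_\<Omega>: "open (fst ` \<Omega>)"
  using open_\<Omega> by (simp add: open_image_fst)

private lemma DERIV_coefficients:
  assumes "q \<in> vf_dom \<Omega>"
  shows "(chi has_real_derivative deriv chi (fst q)) (at (fst q))"
    "(deriv chi has_real_derivative deriv (deriv chi) (fst q)) (at (fst q))"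
    "(\<sigma> has_real_derivative deriv \<sigma> (fst q)) (at (fst q))"
    "(\<rho> has_real_derivative deriv \<rho> (fst q)) (at (fst q))"
  using smooth_on_imp_DERIV[OF _ fst_mem_fst_image_vf_dom[OF assms]] smooth
    smooth_on_deriv[OF open_fst_image_\<Omega> smooth(1)] by blast+

private abbreviation "Q \<equiv> gmi_field \<Omega> chi \<sigma> \<rho>"

private lemma cf_tau_gmi_field: "cf_tau Q = (\<lambda>q. 0)"
  by (simp add: fun_eq_iff cf_tau_def gmi_field_eq)

private lemma dd_cf_xi_gmi_field:
  assumes "q \<in> vf_dom \<Omega>"
  shows "dd (cf_xi Q) q h = deriv chi (fst q) * fst h"
proof -
  have "dd (cf_xi Q) q h = dd (\<lambda>q. chi (fst q)) q h"
    by (rule dd_cong_open[OF open_vf_dom[OF open_\<Omega>] assms]) (simp add: cf_xi_def gmi_field_eq)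
  also have "\<dots> = deriv chi (fst q) * fst h"
    by (rule dd_eq[OF has_derivative_fst_compose[OF DERIV_coefficients(1)[OF assms]]])
  finally show ?thesis .
qed

private lemma dd2_cf_xi_gmi_field: "p \<in> vf_dom \<Omega> \<Longrightarrow> fst h = 0 \<Longrightarrow> dd2 (cf_xi Q) p h k = 0"
  using dd2_eq[OF open_vf_dom[OF open_\<Omega>], of p "cf_xi Q" h "\<lambda>q. 0" "\<lambda>k. 0" k] dd_cf_xi_gmi_field by simp

private lemma dd_cf_eta_gmi_field:
  assumes "q \<in> vf_dom \<Omega>"
  shows "dd (cf_eta Q) q h =
    gmi_factor_deriv (deriv chi) \<sigma> \<rho> q h * snd (snd q) + gmi_factor (deriv chi) \<sigma> \<rho> q * snd (snd h)"
proof -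
  have "(gmi_factor (deriv chi) \<sigma> \<rho> has_derivative gmi_factor_deriv (deriv chi) \<sigma> \<rho> q) (at q)"
    by (rule has_derivative_gmi_factor) (use DERIV_coefficients[OF assms] in auto)
  from has_derivative_mult[OF this has_derivative_snd[OF has_derivative_snd[OF has_derivative_ident]]]
  have "((\<lambda>q. gmi_factor (deriv chi) \<sigma> \<rho> q * snd (snd q)) has_derivative
     (\<lambda>h. gmi_factor_deriv (deriv chi) \<sigma> \<rho> q h * snd (snd q) + gmi_factor (deriv chi) \<sigma> \<rho> q * snd (snd h))) (at q)"
    by (simp add: add.commute)
  moreover have "dd (cf_eta Q) q h = dd (\<lambda>q. gmi_factor (deriv chi) \<sigma> \<rho> q * snd (snd q)) q h"
    by (rule dd_cong_open[OF open_vf_dom[OF open_\<Omega>] assms]) (simp add: cf_eta_def gmi_field_eq)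
  ultimately show ?thesis by (simp add: dd_eq)
qed
private lemma dd2_cf_eta_gmi_field_x:
  assumes p: "p \<in> vf_dom \<Omega>"
  shows "dd2 (cf_eta Q) p (0, 1, 0) k =
    \<i> * of_real (deriv (deriv chi) (fst p) * fst k / 2) * snd (snd p) + \<i> * of_real (deriv chi (fst p) / 2) * snd (snd k)"
proof (rule dd2_eq[OF open_vf_dom[OF open_\<Omega>] p])
  show "dd (cf_eta Q) q (0, 1, 0) = \<i> * of_real (deriv chi (fst q) / 2) * snd (snd q)" if "q \<in> vf_dom \<Omega>" for q
    by (simp add: dd_cf_eta_gmi_field[OF that] gmi_factor_deriv_def)
  show "((\<lambda>q. \<i> * of_real (deriv chi (fst q) / 2) * snd (snd q)) has_derivative
      (\<lambda>k. \<i> * of_real (deriv (deriv chi) (fst p) * fst k / 2) * snd (snd p)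
         + \<i> * of_real (deriv chi (fst p) / 2) * snd (snd k))) (at p)"
    apply (rule derivative_eq_intros has_derivative_fst_compose[OF DERIV_coefficients(2)[OF p]] refl | simp)+
    apply (simp add: fun_eq_iff field_simps)
    done
qed

private lemma dd2_cf_eta_gmi_field_psi:
  assumes p: "p \<in> vf_dom \<Omega>"
  shows "dd2 (cf_eta Q) p (0, 0, a) k = gmi_factor_deriv (deriv chi) \<sigma> \<rho> p k * a"
proof (rule dd2_eq[OF open_vf_dom[OF open_\<Omega>] p])
  show "dd (cf_eta Q) q (0, 0, a) = gmi_factor (deriv chi) \<sigma> \<rho> q * a" if "q \<in> vf_dom \<Omega>" for q
    by (simp add: dd_cf_eta_gmi_field[OF that] gmi_factor_deriv_def)
  show "((\<lambda>q. gmi_factor (deriv chi) \<sigma> \<rho> q * a) has_derivative (\<lambda>k. gmi_factor_deriv (deriv chi) \<sigma> \<rho> p k * a)) (at p)"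
    by (intro has_derivative_mult_left has_derivative_gmi_factor DERIV_coefficients[OF p])
qed

text \<open>On the equation manifold only the last summand survives.\<close>

lemma prE_gmi_field:
  assumes tx: "(t, x) \<in> \<Omega>"
  shows "prE V Q t x \<psi> \<psi>t \<psi>x \<psi>tx \<psi>xx =
     gmi_factor (deriv chi) \<sigma> \<rho> (t, x, \<psi>) * (\<i> * \<psi>t + \<psi>xx + V (t, x) * \<psi>)
     + (\<i> * gmi_factor (deriv (deriv chi)) (deriv \<sigma>) (deriv \<rho>) (t, x, \<psi>) + of_real (chi t) * dd V (t, x) (0, 1)) * \<psi>"
proof -
  define p :: pt where "p = (t, x, \<psi>)"
  have p: "p \<in> vf_dom \<Omega>" using tx by (simp add: p_def vf_dom_def)
  have d2tau: "dd2 (cf_tau Q) q h k = 0" for q h k by (simp add: cf_tau_gmi_field dd2_def dd_def)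
  have "cf_xi Q p = chi t" "cf_eta Q p = gmi_factor (deriv chi) \<sigma> \<rho> p * \<psi>"
    using p by (simp_all add: cf_xi_def cf_eta_def gmi_field_eq p_def)
  then show ?thesis
    unfolding prE_def Let_def Tot_t_def Tot_x_def Tot_xx_def
    apply (simp only: p_def[symmetric] d2tau dd_cf_xi_gmi_field[OF p] dd2_cf_xi_gmi_field[OF p]
        dd_cf_eta_gmi_field[OF p] dd2_cf_eta_gmi_field_x[OF p] dd2_cf_eta_gmi_field_psi[OF p]
        dd2_cf_xi_gmi_field[OF p, of "(0,1,0)", simplified] dd2_cf_xi_gmi_field[OF p, of "(0,0,\<psi>x)", simplified])
    apply (simp add: p_def gmi_factor_deriv_def gmi_factor_def cf_tau_gmi_field dd_def algebra_simps)
    apply (simp add: field_simps)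
    done
qed

lemma lie_sym_gmi_field_iff: "lie_sym V \<Omega> Q \<longleftrightarrow> gmi_determining V \<Omega> chi \<sigma> \<rho>"
proof -
  have key: "\<i> * gmi_factor (deriv (deriv chi)) (deriv \<sigma>) (deriv \<rho>) (t, x, \<psi>) + of_real (chi t) * dd V (t, x) (0, 1) = 0
     \<longleftrightarrow> of_real (chi t) * dd V (t, x) (0, 1)
           = of_real (deriv (deriv chi) t * x / 2 + deriv \<sigma> t) - \<i> * of_real (deriv \<rho> t)"
    for t x \<psi> by (simp add: gmi_factor_def algebra_simps)
  show ?thesis
  proof
    assume L: "lie_sym V \<Omega> Q"
    show "gmi_determining V \<Omega> chi \<sigma> \<rho>" unfolding gmi_determining_def
    proof (intro allI impI)
      fix t x assume tx: "(t, x) \<in> \<Omega>"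
      \<comment> \<open>a jet with \<open>\<psi> = 1\<close> on the equation manifold\<close>
      have "prE V Q t x 1 0 0 0 (- V (t, x)) = 0" using L tx unfolding lie_sym_def by simp
      then show "of_real (chi t) * dd V (t, x) (0, 1)
          = of_real (deriv (deriv chi) t * x / 2 + deriv \<sigma> t) - \<i> * of_real (deriv \<rho> t)"
        using prE_gmi_field[OF tx] key by simp
    qed
  next
    assume D: "gmi_determining V \<Omega> chi \<sigma> \<rho>"
    show "lie_sym V \<Omega> Q" unfolding lie_sym_def
    proof (intro allI impI)
      fix t x \<psi> \<psi>t \<psi>x \<psi>tx \<psi>xx assume tx: "(t, x) \<in> \<Omega>" and E: "\<i> * \<psi>t + \<psi>xx + V (t, x) * \<psi> = 0"
      have "\<i> * gmi_factor (deriv (deriv chi)) (deriv \<sigma>) (deriv \<rho>) (t, x, \<psi>) + of_real (chi t) * dd V (t, x) (0, 1) = 0"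
        using key D tx unfolding gmi_determining_def by blast
      then show "prE V Q t x \<psi> \<psi>t \<psi>x \<psi>tx \<psi>xx = 0" using prE_gmi_field[OF tx] E by simp
    qed
  qed
qed

lemma smooth_on_gmi_field: "smooth_on (vf_dom \<Omega>) Q"
proof -
  note T = open_fst_image_\<Omega>
  define W where "W = (fst :: pt \<Rightarrow> real) -` (fst ` \<Omega>)"
  have W: "open W" unfolding W_def using T by (simp add: open_vimage_fst)
  have UW: "vf_dom \<Omega> \<subseteq> W" unfolding W_def using fst_mem_fst_image_vf_dom by blast
  have fst: "smooth_on W (\<lambda>q. f (fst q))" if "smooth_on (fst ` \<Omega>) f" for f :: "real \<Rightarrow> real"
    using smooth_on_vimage_bounded_linear[OF T bounded_linear_fst that] unfolding W_def .
  have of_real: "smooth_on W (\<lambda>q. complex_of_real (f q))" if "smooth_on W f" for f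
    using smooth_on_compose_bounded_linear[OF W bounded_linear_of_real that] .
  have i_of_real: "smooth_on W (\<lambda>q. \<i> * complex_of_real (f q))" if "smooth_on W f" for f
    using smooth_on_compose_bounded_linear[OF W bounded_linear_compose[OF bounded_linear_mult_right
          bounded_linear_of_real] that] .
  have x: "smooth_on W (\<lambda>q. fst (snd q))" and \<psi>: "smooth_on W (\<lambda>q. snd (snd q))"
    by (simp_all add: smooth_on_bounded_linear bounded_linear_fst bounded_linear_snd bounded_linear_compose)
  have "smooth_on W (\<lambda>q. deriv chi (fst q) * fst (snd q) / 2)"
    using smooth_on_compose_bounded_linear[OF W bounded_linear_divide
        smooth_on_mult[OF W fst[OF smooth_on_deriv[OF T smooth(1)]] x]] .
  then have "smooth_on W (gmi_factor (deriv chi) \<sigma> \<rho>)"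
    unfolding gmi_factor_def
    by (intro smooth_on_add[OF W] i_of_real of_real fst smooth)
  then have "smooth_on W (\<lambda>q. (0::real, chi (fst q), gmi_factor (deriv chi) \<sigma> \<rho> q * snd (snd q)))"
    by (intro smooth_on_Pair[OF W] smooth_on_const fst smooth smooth_on_mult[OF W] \<psi>)
  from smooth_on_subset[OF this UW] show ?thesis
    by (rule smooth_on_cong[OF open_vf_dom[OF open_\<Omega>] order_refl, rotated]) (simp add: gmi_field_eq)
qed
end

definition antideriv :: "real set \<Rightarrow> (real \<Rightarrow> real) \<Rightarrow> real \<Rightarrow> real" where
  "antideriv T g = (SOME G. \<forall>t\<in>T. (G has_real_derivative g t) (at t))"

lemma has_real_derivative_antideriv:
  assumes "open T" "connected T" "continuous_on T g" "t \<in> T"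
  shows "(antideriv T g has_real_derivative g t) (at t)"
proof -
  have "\<forall>t\<in>T. (antideriv T g has_real_derivative g t) (at t)"
    unfolding antideriv_def by (rule someI_ex[OF connected_open_has_antiderivative[OF assms(1-3)]])
  then show ?thesis using assms(4) by blast
qed

lemma deriv_const_fun: "deriv (\<lambda>_. (c::real)) = (\<lambda>_. 0)"
  by (simp add: fun_eq_iff)

lemma gmi_field_mem_iff:
  assumes "open \<Omega>"
  shows "Q \<in> ess_alg V \<Omega> \<inter> span_GMI \<Omega> \<longleftrightarrow>
    (\<exists>chi \<sigma> \<rho>. smooth_on (fst ` \<Omega>) chi \<and> smooth_on (fst ` \<Omega>) \<sigma> \<and> smooth_on (fst ` \<Omega>) \<rho>
       \<and> gmi_determining V \<Omega> chi \<sigma> \<rho> \<and> Q = gmi_field \<Omega> chi \<sigma> \<rho>)"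
proof
  assume Q: "Q \<in> ess_alg V \<Omega> \<inter> span_GMI \<Omega>"
  then obtain chi \<sigma> \<rho> where sm: "smooth_on (fst ` \<Omega>) chi" "smooth_on (fst ` \<Omega>) \<sigma>" "smooth_on (fst ` \<Omega>) \<rho>"
    and Qe: "Q = gmi_field \<Omega> chi \<sigma> \<rho>"
    unfolding span_GMI_def gmi_field_def by blast
  moreover have "lie_sym V \<Omega> Q" using Q by (simp add: ess_alg_def sym_alg_def)
  ultimately show "\<exists>chi \<sigma> \<rho>. smooth_on (fst ` \<Omega>) chi \<and> smooth_on (fst ` \<Omega>) \<sigma> \<and> smooth_on (fst ` \<Omega>) \<rho>
       \<and> gmi_determining V \<Omega> chi \<sigma> \<rho> \<and> Q = gmi_field \<Omega> chi \<sigma> \<rho>"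
    using lie_sym_gmi_field_iff[OF assms] by blast
next
  assume "\<exists>chi \<sigma> \<rho>. smooth_on (fst ` \<Omega>) chi \<and> smooth_on (fst ` \<Omega>) \<sigma> \<and> smooth_on (fst ` \<Omega>) \<rho>
       \<and> gmi_determining V \<Omega> chi \<sigma> \<rho> \<and> Q = gmi_field \<Omega> chi \<sigma> \<rho>"
  then obtain chi \<sigma> \<rho> where sm: "smooth_on (fst ` \<Omega>) chi" "smooth_on (fst ` \<Omega>) \<sigma>" "smooth_on (fst ` \<Omega>) \<rho>"
    and D: "gmi_determining V \<Omega> chi \<sigma> \<rho>" and Qe: "Q = gmi_field \<Omega> chi \<sigma> \<rho>" by blast
  \<comment> \<open>\<open>G(\<chi>) + \<sigma>M + \<rho>I = D(0) + G(\<chi>) + \<sigma>M + \<rho>I\<close>\<close>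
  have "vD (\<lambda>_. 0) = 0" by (simp add: fun_eq_iff vD_def deriv_const_fun zero_prod_def)
  then have "Q = loc \<Omega> (vD (\<lambda>_. 0) + vG chi + vM \<sigma> + vI \<rho>)" by (simp add: Qe gmi_field_def)
  then have "Q \<in> span_DGMI \<Omega>" unfolding span_DGMI_def using sm smooth_on_const by blast
  moreover have "Q \<in> sym_alg V \<Omega>"
    unfolding sym_alg_def Qe using smooth_on_gmi_field[OF assms sm] lie_sym_gmi_field_iff[OF assms sm] D
    by (auto simp: gmi_field_def loc_def)
  moreover have "Q \<in> span_GMI \<Omega>" unfolding span_GMI_def Qe gmi_field_def using sm by blast
  ultimately show "Q \<in> ess_alg V \<Omega> \<inter> span_GMI \<Omega>" by (simp add: ess_alg_def)
qed

lemma vector_space_vscale: "vector_space vscale"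
  by unfold_locales (auto simp: vscale_def plus_fun_def fun_eq_iff scaleR_right_distrib scaleR_left_distrib)

lemma gmi_field_lincomb:
  assumes "\<And>t. t \<in> fst ` \<Omega> \<Longrightarrow> chi t = a * c1 t + b * c2 t + c * c3 t + d * c4 t"
    "\<And>t. t \<in> fst ` \<Omega> \<Longrightarrow> deriv chi t = a * deriv c1 t + b * deriv c2 t + c * deriv c3 t + d * deriv c4 t"
    "\<And>t. t \<in> fst ` \<Omega> \<Longrightarrow> \<sigma> t = a * s1 t + b * s2 t + c * s3 t + d * s4 t"
    "\<And>t. t \<in> fst ` \<Omega> \<Longrightarrow> \<rho> t = a * r1 t + b * r2 t + c * r3 t + d * r4 t"
  shows "gmi_field \<Omega> chi \<sigma> \<rho> = vscale a (gmi_field \<Omega> c1 s1 r1) + vscale b (gmi_field \<Omega> c2 s2 r2)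
    + vscale c (gmi_field \<Omega> c3 s3 r3) + vscale d (gmi_field \<Omega> c4 s4 r4)"
proof (rule ext)
  fix p :: pt
  show "gmi_field \<Omega> chi \<sigma> \<rho> p = (vscale a (gmi_field \<Omega> c1 s1 r1) + vscale b (gmi_field \<Omega> c2 s2 r2)
    + vscale c (gmi_field \<Omega> c3 s3 r3) + vscale d (gmi_field \<Omega> c4 s4 r4)) p"
  proof (cases "p \<in> vf_dom \<Omega>")
    case False then show ?thesis by (simp only: gmi_field_eq vscale_def plus_fun_apply) (simp add: False)
  next
    case True
    show ?thesis using True
      by (simp only: gmi_field_eq vscale_def plus_fun_apply)
        (simp add: gmi_factor_def assms[OF fst_mem_fst_image_vf_dom[OF True]] scaleR_conv_of_real algebra_simps)
  qed
qed

locale smooth_potential =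
  fixes V :: "real \<times> real \<Rightarrow> complex" and \<Omega> :: "(real \<times> real) set"
  assumes open_\<Omega>: "open \<Omega>" and connected_\<Omega>: "connected \<Omega>" and nonempty_\<Omega>: "\<Omega> \<noteq> {}"
    and smooth_V: "smooth_on \<Omega> V"
begin

abbreviation T where "T \<equiv> fst ` \<Omega>"

definition Vx :: "real \<Rightarrow> real \<Rightarrow> complex" where "Vx t x = dd V (t, x) (0, 1)"

definition gmi_sym :: "(real \<Rightarrow> real) \<Rightarrow> (real \<Rightarrow> real) \<Rightarrow> (real \<Rightarrow> real) \<Rightarrow> bool" where
  "gmi_sym chi \<sigma> \<rho> \<longleftrightarrow> smooth_on T chi \<and> smooth_on T \<sigma> \<and> smooth_on T \<rho> \<and> gmi_determining V \<Omega> chi \<sigma> \<rho>"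

lemma open_T: "open T" using open_\<Omega> by (simp add: open_image_fst)
lemma connected_T: "connected T" using connected_\<Omega> by (intro connected_continuous_image continuous_intros)

lemma mem_T: "(t, x) \<in> \<Omega> \<Longrightarrow> t \<in> T" by (metis fst_conv image_eqI)

lemma square_nbhd:
  assumes "(t, x) \<in> \<Omega>"
  obtains e where "e > 0" "\<And>t' x'. \<bar>t' - t\<bar> < e \<Longrightarrow> \<bar>x' - x\<bar> < e \<Longrightarrow> (t', x') \<in> \<Omega>"
proof -
  obtain e where e: "e > 0" "ball (t, x) e \<subseteq> \<Omega>" using open_\<Omega> assms open_contains_ball by blast
  show ?thesis
  proof (rule that[of "e/2"])
    fix t' x' assume h: "\<bar>t' - t\<bar> < e/2" "\<bar>x' - x\<bar> < e/2"
    have "dist (t', x') (t, x) \<le> dist (t', x') (t', x) + dist (t', x) (t, x)" by (rule dist_triangle)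
    also have "\<dots> = \<bar>x' - x\<bar> + \<bar>t' - t\<bar>" by (simp add: dist_Pair_Pair dist_real_def)
    finally show "(t', x') \<in> \<Omega>" using e h by (auto simp: dist_commute subset_iff)
  qed (use e in simp)
qed

lemma finite_vertical_nbhd:
  assumes "finite X" "\<And>x. x \<in> X \<Longrightarrow> (t, x) \<in> \<Omega>"
  obtains e where "e > 0" "\<And>t' x. \<bar>t' - t\<bar> < e \<Longrightarrow> x \<in> X \<Longrightarrow> (t', x) \<in> \<Omega>"
proof -
  have "open (\<Inter>x\<in>X. (\<lambda>t. (t, x)) -` \<Omega>)"
    using assms(1) by (intro open_INT ballI continuous_open_vimage[OF open_\<Omega>] continuous_intros)
  moreover have "t \<in> (\<Inter>x\<in>X. (\<lambda>t. (t, x)) -` \<Omega>)" using assms(2) by auto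
  ultimately obtain e where "e > 0" "ball t e \<subseteq> (\<Inter>x\<in>X. (\<lambda>t. (t, x)) -` \<Omega>)"
    using open_contains_ball by blast
  then show ?thesis using that by (auto simp: dist_real_def abs_minus_commute subset_iff)
qed

lemma isCont_Vx: "(t, x) \<in> \<Omega> \<Longrightarrow> isCont (\<lambda>t. Vx t x) t"
proof -
  assume tx: "(t, x) \<in> \<Omega>"
  have "iter_dd V [(0, 1)] differentiable (at (t, x))" using smooth_V tx unfolding smooth_on_def by blast
  then have "isCont (\<lambda>p. dd V p (0, 1)) (t, x)" by (simp add: dd_def differentiable_imp_continuous_within)
  then show ?thesis unfolding Vx_def
    by (rule continuous_at_compose[of _ "\<lambda>t. (t, x)" "\<lambda>p. dd V p (0, 1)", unfolded o_def, rotated])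
      (auto intro: continuous_intros)
qed

lemma smooth_on_Vx: "smooth_on {t. (t, x) \<in> \<Omega>} (\<lambda>t. Vx t x)"
proof -
  have bl: "bounded_linear (\<lambda>t::real. (t, 0::real))" by (intro bounded_linear_intros)
  have "smooth_on ((\<lambda>t. (t, 0) + (0, x)) -` \<Omega>) (\<lambda>t. frechet_derivative V (at ((t, 0) + (0, x))) (0, 1))"
    by (rule smooth_on_vimage_affine[OF open_\<Omega> bl smooth_on_frechet_derivative[OF smooth_V]])
  then show ?thesis by (simp add: Vx_def dd_def vimage_def)
qed

lemma gmi_determining_Vx_diff:
  assumes "gmi_determining V \<Omega> chi \<sigma> \<rho>" "(t, x) \<in> \<Omega>" "(t, x') \<in> \<Omega>"
  shows "of_real (chi t) * (Vx t x - Vx t x') = of_real (deriv (deriv chi) t * (x - x') / 2)"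
proof -
  have e1: "of_real (chi t) * Vx t x = of_real (deriv (deriv chi) t * x / 2 + deriv \<sigma> t) - \<i> * of_real (deriv \<rho> t)"
    and e2: "of_real (chi t) * Vx t x' = of_real (deriv (deriv chi) t * x' / 2 + deriv \<sigma> t) - \<i> * of_real (deriv \<rho> t)"
    using assms unfolding gmi_determining_def Vx_def by auto
  have "of_real (chi t) * (Vx t x - Vx t x') = of_real (chi t) * Vx t x - of_real (chi t) * Vx t x'"
    by (simp add: right_diff_distrib)
  also have "\<dots> = of_real (deriv (deriv chi) t * x / 2 + deriv \<sigma> t) - of_real (deriv (deriv chi) t * x' / 2 + deriv \<sigma> t)"
    unfolding e1 e2 by simp
  also have "\<dots> = of_real (deriv (deriv chi) t * (x - x') / 2)"
    by (simp only: of_real_diff[symmetric]) (simp add: algebra_simps diff_divide_distrib)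
  finally show ?thesis .
qed

lemma gmi_sym_DERIV:
  assumes "gmi_sym chi \<sigma> \<rho>" "t \<in> T"
  shows "(chi has_real_derivative deriv chi t) (at t)" "(deriv chi has_real_derivative deriv (deriv chi) t) (at t)"
    "(\<sigma> has_real_derivative deriv \<sigma> t) (at t)" "(\<rho> has_real_derivative deriv \<rho> t) (at t)"
  using assms smooth_on_imp_DERIV smooth_on_deriv[OF open_T] unfolding gmi_sym_def by blast+

lemma gmi_sym_continuous_on:
  assumes "gmi_sym chi \<sigma> \<rho>"
  shows "continuous_on T chi" "continuous_on T (deriv chi)"
  using gmi_sym_DERIV[OF assms] by (metis DERIV_isCont continuous_at_imp_continuous_on)+

lemma gmi_field_mem_iff_gmi_sym:
  "Q \<in> ess_alg V \<Omega> \<inter> span_GMI \<Omega> \<longleftrightarrow> (\<exists>chi \<sigma> \<rho>. gmi_sym chi \<sigma> \<rho> \<and> Q = gmi_field \<Omega> chi \<sigma> \<rho>)"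
  unfolding gmi_field_mem_iff[OF open_\<Omega>] gmi_sym_def by blast

text \<open>Near a common zero of \<open>\<chi>, \<chi>'\<close>, the determining equation at two abscissae gives
  \<open>\<chi>'' = k(t) \<chi>\<close> with \<open>k\<close> continuous, so \<open>\<chi>\<close> vanishes on a neighbourhood.\<close>

lemma gmi_sym_common_zeros_open:
  assumes S: "gmi_sym chi \<sigma> \<rho>"
  shows "open {t\<in>T. chi t = 0 \<and> deriv chi t = 0}" (is "open ?Z")
  unfolding open_contains_ball
proof
  fix t1 assume t1: "t1 \<in> ?Z"
  then obtain x1 where x1: "(t1, x1) \<in> \<Omega>" by auto
  obtain e where e: "e > 0" "\<And>t' x'. \<bar>t' - t1\<bar> < e \<Longrightarrow> \<bar>x' - x1\<bar> < e \<Longrightarrow> (t', x') \<in> \<Omega>"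
    using square_nbhd[OF x1] by blast
  define d where "d = e / 2"
  have d: "d > 0" "d < e" using e by (auto simp: d_def)
  have in\<Omega>: "(t, x1) \<in> \<Omega>" "(t, x1 + d) \<in> \<Omega>" if "\<bar>t - t1\<bar> \<le> d" for t
    using e(2) that d by auto
  define k where "k t = Re (Vx t (x1 + d) - Vx t x1)" for t
  have rel: "chi t * k t = deriv (deriv chi) t * d / 2" if "\<bar>t - t1\<bar> \<le> d" for t
  proof -
    have "of_real (chi t) * (Vx t (x1 + d) - Vx t x1) = of_real (deriv (deriv chi) t * (x1 + d - x1) / 2)"
      using S in\<Omega>[OF that] gmi_determining_Vx_diff unfolding gmi_sym_def by blast
    from arg_cong[where f=Re, OF this] show ?thesis by (simp add: k_def)
  qed
  have "continuous_on {t1 - d..t1 + d} k"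
    unfolding k_def using isCont_Vx in\<Omega>
    by (intro continuous_at_imp_continuous_on ballI isCont_Re continuous_diff) auto
  then have "bounded (k ` {t1 - d..t1 + d})" by (intro compact_imp_bounded compact_continuous_image compact_Icc)
  then obtain M where M: "\<And>t. t \<in> {t1 - d..t1 + d} \<Longrightarrow> \<bar>k t\<bar> \<le> M"
    unfolding bounded_iff by (auto simp del: atLeastAtMost_iff)
  have zero: "chi t = 0" if "\<bar>t - t1\<bar> < d" for t
  proof (rule second_order_zero_uniqueness[of "t1 - d" "t1 + d" chi "deriv chi" "deriv (deriv chi)" "2 * M / d" t1])
    fix t assume h: "t1 - d \<le> t" "t \<le> t1 + d"
    then have "t \<in> T" using in\<Omega>(1)[of t] mem_T by force
    then show "(chi has_real_derivative deriv chi t) (at t)" "(deriv chi has_real_derivative deriv (deriv chi) t) (at t)"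
      using gmi_sym_DERIV[OF S] by auto
    have "deriv (deriv chi) t = 2 * chi t * k t / d" using rel[of t] h d by (simp add: field_simps)
    then have "\<bar>deriv (deriv chi) t\<bar> = 2 * \<bar>chi t\<bar> * \<bar>k t\<bar> / d" using d by (simp add: abs_mult)
    also have "\<dots> \<le> 2 * \<bar>chi t\<bar> * M / d" using M[of t] h d by (intro divide_right_mono mult_left_mono) auto
    finally show "\<bar>deriv (deriv chi) t\<bar> \<le> 2 * M / d * \<bar>chi t\<bar>" by (simp add: field_simps)
  qed (use t1 that d in auto)
  have "ball t1 d \<subseteq> ?Z"
  proof
    fix t assume t: "t \<in> ball t1 d"
    then have "\<bar>t - t1\<bar> < d" by (simp add: dist_real_def abs_minus_commute)
    then have "t \<in> T" using in\<Omega>(1)[of t] mem_T by force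
    moreover have "deriv chi t = 0"
      by (rule deriv_zero_if_zero_on_open[of "ball t1 d"]) (use t zero in \<open>auto simp: dist_real_def abs_minus_commute\<close>)
    ultimately show "t \<in> ?Z" using zero \<open>\<bar>t - t1\<bar> < d\<close> by simp
  qed
  then show "\<exists>d>0. ball t1 d \<subseteq> ?Z" using d by blast
qed

lemma gmi_sym_zero_if_zero_at:
  assumes S: "gmi_sym chi \<sigma> \<rho>" and t0: "t0 \<in> T" "chi t0 = 0" "deriv chi t0 = 0"
  shows "\<forall>t\<in>T. chi t = 0"
  using connected_common_zeros_open_imp_everywhere[OF connected_T gmi_sym_continuous_on[OF S]
      gmi_sym_common_zeros_open[OF S] t0] by blast

lemma gmi_sym_nonzero_arbitrarily_close:
  assumes S: "gmi_sym chi \<sigma> \<rho>" and nz: "\<exists>t\<in>T. chi t \<noteq> 0" and t0: "t0 \<in> T" and e: "e > 0"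
  shows "\<exists>t. \<bar>t - t0\<bar> < e \<and> chi t \<noteq> 0"
proof (rule ccontr)
  assume H: "\<not> ?thesis"
  obtain e' where e': "e' > 0" "ball t0 e' \<subseteq> T" using open_T t0 open_contains_ball by blast
  define d where "d = min e e'"
  have z: "chi t = 0" if "t \<in> ball t0 d" for t
    using H that by (auto simp: d_def dist_real_def abs_minus_commute)
  have "d > 0" using e e' by (simp add: d_def)
  then have "chi t0 = 0" "deriv chi t0 = 0" using z deriv_zero_if_zero_on_open[of "ball t0 d" chi t0] by auto
  then show False using gmi_sym_zero_if_zero_at[OF S t0] nz by blast
qed

definition field_M where "field_M = gmi_field \<Omega> (\<lambda>_. 0) (\<lambda>_. 1) (\<lambda>_. 0)"
definition field_I where "field_I = gmi_field \<Omega> (\<lambda>_. 0) (\<lambda>_. 0) (\<lambda>_. 1)"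

lemma gmi_sym_const: "gmi_sym (\<lambda>_. 0) (\<lambda>_. c) (\<lambda>_. d)"
  unfolding gmi_sym_def gmi_determining_def by (simp add: smooth_on_const deriv_const_fun)

lemma field_M_mem: "field_M \<in> ess_alg V \<Omega> \<inter> span_GMI \<Omega>"
  unfolding field_M_def gmi_field_mem_iff_gmi_sym using gmi_sym_const by blast

lemma field_I_mem: "field_I \<in> ess_alg V \<Omega> \<inter> span_GMI \<Omega>"
  unfolding field_I_def gmi_field_mem_iff_gmi_sym using gmi_sym_const by blast

lemma field_M_apply: "(t, x) \<in> \<Omega> \<Longrightarrow> field_M (t, x, 1) = (0, 0, \<i>)"
  by (simp add: field_M_def gmi_field_apply gmi_factor_def deriv_const_fun)

lemma field_I_apply: "(t, x) \<in> \<Omega> \<Longrightarrow> field_I (t, x, 1) = (0, 0, 1)"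
  by (simp add: field_I_def gmi_field_apply gmi_factor_def deriv_const_fun)

lemma field_M_I_independent: "vscale c field_M + vscale d field_I = 0 \<Longrightarrow> c = 0 \<and> d = 0"
proof -
  assume "vscale c field_M + vscale d field_I = 0"
  moreover obtain t x where p: "(t, x) \<in> \<Omega>" using nonempty_\<Omega> by auto
  ultimately have "(vscale c field_M + vscale d field_I) (t, x, 1) = 0" by simp
  then have "c *\<^sub>R \<i> + d *\<^sub>R 1 = (0::complex)" by (simp add: vscale_def field_M_apply[OF p] field_I_apply[OF p] zero_prod_def)
  then show "c = 0 \<and> d = 0" by (simp add: complex_eq_iff scaleR_conv_of_real)
qed

lemma field_M_neq_I: "field_M \<noteq> field_I"
  using field_M_I_independent[of 1 "-1"] by (auto simp: vscale_def fun_eq_iff)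

end

section \<open>A nonvanishing \<open>\<chi>\<close> forces \<open>V\<^sub>x\<close> to be affine in \<open>x\<close>\<close>

locale nonzero_gmi_sym = smooth_potential +
  fixes chi0 \<sigma>0 \<rho>0 :: "real \<Rightarrow> real"
  assumes gmi_sym0: "gmi_sym chi0 \<sigma>0 \<rho>0" and nonzero0: "\<exists>t\<in>T. chi0 t \<noteq> 0"
begin

definition Vx_slope :: "real \<Rightarrow> real \<Rightarrow> real \<Rightarrow> complex" where
  "Vx_slope t x x' = (Vx t x - Vx t x') / of_real (x - x')"

lemma Vx_slope_at_nonzero:
  assumes "(t, x) \<in> \<Omega>" "(t, x') \<in> \<Omega>" "x \<noteq> x'" "chi0 t \<noteq> 0"
  shows "Vx_slope t x x' = of_real (deriv (deriv chi0) t / (2 * chi0 t))"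
proof -
  have eq: "of_real (chi0 t) * (Vx t x - Vx t x') = of_real (deriv (deriv chi0) t * (x - x') / 2)"
    by (rule gmi_determining_Vx_diff[of chi0 \<sigma>0 \<rho>0, OF _ assms(1,2)]) (use gmi_sym0 in \<open>simp add: gmi_sym_def\<close>)
  have "Vx t x - Vx t x' = of_real (chi0 t) * (Vx t x - Vx t x') / of_real (chi0 t)"
    using assms(4) by simp
  also have "\<dots> = of_real (deriv (deriv chi0) t * (x - x') / 2 / chi0 t)" by (simp only: eq of_real_divide)
  finally have "Vx_slope t x x' = of_real (deriv (deriv chi0) t * (x - x') / 2 / chi0 t / (x - x'))"
    by (simp only: Vx_slope_def of_real_divide)
  also have "deriv (deriv chi0) t * (x - x') / 2 / chi0 t / (x - x') = deriv (deriv chi0) t / (2 * chi0 t)"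
    using assms(3,4) by (simp add: field_simps)
  finally show ?thesis .
qed

text \<open>By continuity in \<open>t\<close>, the value at the dense set where \<open>\<chi>\<^sub>0 \<noteq> 0\<close> propagates.\<close>

lemma isCont_zero_if_zero_where_chi0_nonzero:
  fixes g :: "real \<Rightarrow> 'a::real_normed_vector"
  assumes "t \<in> T" "isCont g t" "e0 > 0" "\<And>t'. \<bar>t' - t\<bar> < e0 \<Longrightarrow> chi0 t' \<noteq> 0 \<Longrightarrow> g t' = 0"
  shows "g t = 0"
proof (rule isCont_zero_if_zeros_arbitrarily_close[OF assms(2)])
  fix e :: real assume "e > 0"
  then have "min e e0 > 0" using assms(3) by simp
  then obtain t' where "\<bar>t' - t\<bar> < min e e0" "chi0 t' \<noteq> 0"
    using gmi_sym_nonzero_arbitrarily_close[OF gmi_sym0 nonzero0 assms(1)] by blast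
  then show "\<exists>t'. \<bar>t' - t\<bar> < e \<and> g t' = 0" using assms(4) by auto
qed

lemma Vx_slope_real_and_independent:
  assumes "(t, x1) \<in> \<Omega>" "(t, x1') \<in> \<Omega>" "(t, x2) \<in> \<Omega>" "(t, x2') \<in> \<Omega>" "x1 \<noteq> x1'" "x2 \<noteq> x2'"
  shows "Vx_slope t x1 x1' = Vx_slope t x2 x2'" "Im (Vx_slope t x1 x1') = 0"
proof -
  let ?X = "{x1, x1', x2, x2'}"
  have t: "t \<in> T" using mem_T[OF assms(1)] .
  obtain e0 where e0: "e0 > 0" "\<And>t' x. \<bar>t' - t\<bar> < e0 \<Longrightarrow> x \<in> ?X \<Longrightarrow> (t', x) \<in> \<Omega>"
    by (rule finite_vertical_nbhd[of ?X t]) (use assms(1-4) in auto)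
  have cont: "isCont (\<lambda>t. Vx_slope t x x') t" if "x \<in> ?X" "x' \<in> ?X" for x x'
    unfolding Vx_slope_def divide_inverse using that assms(1-4)
    by (intro continuous_mult continuous_const continuous_diff isCont_Vx) auto
  have at_nonzero: "Vx_slope t' x1 x1' = of_real (deriv (deriv chi0) t' / (2 * chi0 t'))"
    "Vx_slope t' x2 x2' = of_real (deriv (deriv chi0) t' / (2 * chi0 t'))"
    if "\<bar>t' - t\<bar> < e0" "chi0 t' \<noteq> 0" for t'
    by (rule Vx_slope_at_nonzero; use e0(2)[OF that(1)] that(2) assms(5,6) in simp)+
  have "isCont (\<lambda>t. Vx_slope t x1 x1' - Vx_slope t x2 x2') t" using cont by (intro continuous_diff) auto
  then have "Vx_slope t x1 x1' - Vx_slope t x2 x2' = 0"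
    by (rule isCont_zero_if_zero_where_chi0_nonzero[OF t _ e0(1)]) (simp add: at_nonzero)
  then show "Vx_slope t x1 x1' = Vx_slope t x2 x2'" by simp
  have "isCont (\<lambda>t. Im (Vx_slope t x1 x1')) t" using cont by (intro isCont_Im) auto
  then show "Im (Vx_slope t x1 x1') = 0"
    by (rule isCont_zero_if_zero_where_chi0_nonzero[OF t _ e0(1)]) (simp add: at_nonzero)
qed

definition xa :: "real \<Rightarrow> real" where "xa t = (SOME x. (t, x) \<in> \<Omega>)"
definition xb :: "real \<Rightarrow> real" where "xb t = (SOME x. (t, x) \<in> \<Omega> \<and> x \<noteq> xa t)"

text \<open>\<open>V\<^sub>x(t, x) = A(t) x + B(t)\<close>, with \<open>A\<close> real.\<close>

definition A :: "real \<Rightarrow> real" where "A t = Re (Vx_slope t (xa t) (xb t))"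
definition B :: "real \<Rightarrow> complex" where "B t = Vx t (xa t) - of_real (A t * xa t)"

lemma xa: "t \<in> T \<Longrightarrow> (t, xa t) \<in> \<Omega>"
  unfolding xa_def by (rule someI_ex) auto

lemma xb:
  assumes "t \<in> T"
  shows "(t, xb t) \<in> \<Omega>" "xb t \<noteq> xa t"
proof -
  obtain e where e: "e > 0" "\<And>t' x'. \<bar>t' - t\<bar> < e \<Longrightarrow> \<bar>x' - xa t\<bar> < e \<Longrightarrow> (t', x') \<in> \<Omega>"
    using square_nbhd[OF xa[OF assms]] by blast
  then have "(t, xa t + e/2) \<in> \<Omega> \<and> xa t + e/2 \<noteq> xa t" by auto
  then have "(t, xb t) \<in> \<Omega> \<and> xb t \<noteq> xa t" unfolding xb_def by (rule someI)
  then show "(t, xb t) \<in> \<Omega>" "xb t \<noteq> xa t" by auto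
qed

lemma Vx_slope_eq_A:
  assumes "(t, x) \<in> \<Omega>" "(t, x') \<in> \<Omega>" "x \<noteq> x'"
  shows "Vx_slope t x x' = of_real (A t)"
proof -
  have t: "t \<in> T" using assms(1) mem_T by blast
  note pts = xa[OF t] xb(1)[OF t]
  have "Vx_slope t x x' = Vx_slope t (xa t) (xb t)"
    using Vx_slope_real_and_independent(1)[OF assms(1,2) pts assms(3)] xb(2)[OF t] by auto
  moreover have "Im (Vx_slope t (xa t) (xb t)) = 0"
    using Vx_slope_real_and_independent(2)[OF pts pts] xb(2)[OF t] by auto
  ultimately show ?thesis unfolding A_def by (simp add: complex_eq_iff)
qed

lemma Vx_affine: assumes "(t, x) \<in> \<Omega>" shows "Vx t x = of_real (A t * x) + B t"
proof (cases "x = xa t")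
  case False
  have "t \<in> T" using assms mem_T by blast
  then have "Vx_slope t x (xa t) = of_real (A t)" by (rule Vx_slope_eq_A[OF assms xa False])
  then have "Vx t x - Vx t (xa t) = of_real (A t) * of_real (x - xa t)"
    using False by (simp add: Vx_slope_def field_simps)
  then show ?thesis by (simp add: B_def algebra_simps)
qed (simp add: B_def)

lemma A_B_locally:
  assumes t0: "t0 \<in> T"
  obtains U g h where "open U" "t0 \<in> U" "smooth_on U g" "smooth_on U h" "\<And>t. t \<in> U \<Longrightarrow> A t = g t \<and> B t = h t"
proof -
  define x0 x1 where "x0 = xa t0" and "x1 = xb t0"
  obtain e where e: "e > 0" "\<And>t x. \<bar>t - t0\<bar> < e \<Longrightarrow> x \<in> {x0, x1} \<Longrightarrow> (t, x) \<in> \<Omega>"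
    by (rule finite_vertical_nbhd[of "{x0, x1}" t0]) (use xa[OF t0] xb[OF t0] in \<open>auto simp: x0_def x1_def\<close>)
  define U where "U = ball t0 e"
  have U: "open U" "t0 \<in> U" "x0 \<noteq> x1" using e(1) xb(2)[OF t0] by (auto simp: U_def x0_def x1_def)
  have in\<Omega>: "(t, x0) \<in> \<Omega> \<and> (t, x1) \<in> \<Omega>" if "t \<in> U" for t
    using that e(2)[of t] by (auto simp: U_def dist_real_def abs_minus_commute)
  define g where "g = (\<lambda>t. Re (Vx t x1 + - Vx t x0) / (x1 - x0))"
  define h where "h = (\<lambda>t. Vx t x0 + - of_real (g t * x0))"
  have Vx: "smooth_on U (\<lambda>t. Vx t x)" if "x \<in> {x0, x1}" for x
    using smooth_on_subset[OF smooth_on_Vx] in\<Omega> that by blast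
  have "smooth_on U (\<lambda>t. Vx t x1 + - Vx t x0)"
    by (rule smooth_on_add[OF U(1) Vx smooth_on_uminus[OF U(1) Vx]]) simp_all
  then have g: "smooth_on U g" unfolding g_def
    by (rule smooth_on_compose_bounded_linear[OF U(1)
          bounded_linear_compose[OF bounded_linear_divide bounded_linear_Re]])
  have "smooth_on U (\<lambda>t. complex_of_real (g t * x0))"
    by (rule smooth_on_compose_bounded_linear[OF U(1)
          bounded_linear_compose[OF bounded_linear_of_real bounded_linear_mult_left] g])
  then have h: "smooth_on U h" unfolding h_def
    by (rule smooth_on_add[OF U(1) Vx smooth_on_uminus[OF U(1)], rotated]) simp
  have "A t = g t \<and> B t = h t" if "t \<in> U" for t
  proof -
    from in\<Omega>[OF that] have in0: "(t, x0) \<in> \<Omega>" and in1: "(t, x1) \<in> \<Omega>" by auto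
    have "Vx_slope t x1 x0 = of_real (A t)" using Vx_slope_eq_A[OF in1 in0] U(3) by simp
    then have "Vx t x1 - Vx t x0 = of_real (A t) * of_real (x1 - x0)"
      using U(3) by (simp add: Vx_slope_def divide_eq_eq)
    then have "Re (Vx t x1 - Vx t x0) = A t * (x1 - x0)"
      by (simp only: of_real_mult[symmetric] Re_complex_of_real)
    then have A: "A t = g t" using U(3) by (simp add: g_def)
    have eq: "Vx t x0 = of_real (A t * x0) + B t" by (rule Vx_affine[OF in0])
    have "h t = of_real (g t * x0) + B t + - of_real (g t * x0)" by (simp only: h_def eq A)
    then have "B t = h t" by simp
    with A show ?thesis ..
  qed
  then show ?thesis using that[OF U(1,2) g h] by blast
qed

lemma smooth_on_A_B: "smooth_on T A" "smooth_on T B"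
proof -
  have A_loc: "\<exists>U g. open U \<and> t0 \<in> U \<and> smooth_on U g \<and> (\<forall>t\<in>U. A t = g t)"
    and B_loc: "\<exists>U h. open U \<and> t0 \<in> U \<and> smooth_on U h \<and> (\<forall>t\<in>U. B t = h t)" if t0: "t0 \<in> T" for t0
  proof -
    obtain U g h where U: "open U" "t0 \<in> U" and gh: "smooth_on U g" "smooth_on U h"
      and eq: "\<And>t. t \<in> U \<Longrightarrow> A t = g t \<and> B t = h t"
      using A_B_locally[OF t0] by blast
    show "\<exists>U g. open U \<and> t0 \<in> U \<and> smooth_on U g \<and> (\<forall>t\<in>U. A t = g t)"
      by (intro exI[of _ U] exI[of _ g]) (use U gh eq in auto)
    show "\<exists>U h. open U \<and> t0 \<in> U \<and> smooth_on U h \<and> (\<forall>t\<in>U. B t = h t)"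
      by (intro exI[of _ U] exI[of _ h]) (use U gh eq in auto)
  qed
  show "smooth_on T A" by (rule smooth_on_locally[OF A_loc])
  show "smooth_on T B" by (rule smooth_on_locally[OF B_loc])
qed

lemma gmi_determining_imp_ode:
  assumes D: "gmi_determining V \<Omega> chi \<sigma> \<rho>" and "t \<in> T"
  shows "deriv (deriv chi) t = 2 * A t * chi t"
    "of_real (chi t) * B t = of_real (deriv \<sigma> t) - \<i> * of_real (deriv \<rho> t)"
proof -
  define x0 x1 where "x0 = xa t" and "x1 = xb t"
  have x01: "x0 \<noteq> x1" and in\<Omega>: "(t, x0) \<in> \<Omega>" "(t, x1) \<in> \<Omega>"
    using xa[OF \<open>t \<in> T\<close>] xb[OF \<open>t \<in> T\<close>] by (auto simp: x0_def x1_def)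
  have "of_real (chi t) * (Vx t x1 - Vx t x0) = of_real (deriv (deriv chi) t * (x1 - x0) / 2)"
    by (rule gmi_determining_Vx_diff[OF D in\<Omega>(2,1)])
  then have "of_real (chi t * A t * (x1 - x0)) = (of_real (deriv (deriv chi) t * (x1 - x0) / 2) :: complex)"
    using Vx_affine[OF in\<Omega>(1)] Vx_affine[OF in\<Omega>(2)] by (simp add: algebra_simps)
  then have "chi t * A t * (x1 - x0) = deriv (deriv chi) t * (x1 - x0) / 2"
    by (simp only: of_real_eq_iff)
  then have "(deriv (deriv chi) t - 2 * A t * chi t) * (x1 - x0) = 0" by (simp add: algebra_simps)
  then show ode: "deriv (deriv chi) t = 2 * A t * chi t" using x01 by simp
  have "of_real (chi t) * Vx t x0 = of_real (deriv (deriv chi) t * x0 / 2 + deriv \<sigma> t) - \<i> * of_real (deriv \<rho> t)"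
    using D in\<Omega>(1) unfolding gmi_determining_def Vx_def by auto
  then show "of_real (chi t) * B t = of_real (deriv \<sigma> t) - \<i> * of_real (deriv \<rho> t)"
    using Vx_affine[OF in\<Omega>(1)] ode by (simp add: algebra_simps)
qed

lemma gmi_determining_if_ode:
  assumes ode: "\<And>t. t \<in> T \<Longrightarrow> deriv (deriv chi) t = 2 * A t * chi t"
    and B: "\<And>t. t \<in> T \<Longrightarrow> of_real (chi t) * B t = of_real (deriv \<sigma> t) - \<i> * of_real (deriv \<rho> t)"
  shows "gmi_determining V \<Omega> chi \<sigma> \<rho>"
  unfolding gmi_determining_def
proof (intro allI impI)
  fix t x assume x: "(t, x) \<in> \<Omega>"
  then have t: "t \<in> T" using mem_T by blast
  have "of_real (chi t) * dd V (t, x) (0, 1) = of_real (chi t) * (of_real (A t * x) + B t)"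
    using Vx_affine[OF x] by (simp add: Vx_def)
  also have "\<dots> = of_real (chi t * A t * x) + (of_real (deriv \<sigma> t) - \<i> * of_real (deriv \<rho> t))"
    using B[OF t] by (simp add: algebra_simps)
  also have "\<dots> = of_real (deriv (deriv chi) t * x / 2 + deriv \<sigma> t) - \<i> * of_real (deriv \<rho> t)"
    using ode[OF t] by (simp add: algebra_simps)
  finally show "of_real (chi t) * dd V (t, x) (0, 1)
    = of_real (deriv (deriv chi) t * x / 2 + deriv \<sigma> t) - \<i> * of_real (deriv \<rho> t)" .
qed

lemma gmi_sym_derivs:
  assumes "gmi_sym chi \<sigma> \<rho>" "t \<in> T"
  shows "deriv (deriv chi) t = 2 * A t * chi t" "deriv \<sigma> t = chi t * Re (B t)" "deriv \<rho> t = - (chi t * Im (B t))"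
proof -
  have "gmi_determining V \<Omega> chi \<sigma> \<rho>" using assms(1) by (simp add: gmi_sym_def)
  note ode = gmi_determining_imp_ode(1)[OF this assms(2)]
    and eq = gmi_determining_imp_ode(2)[OF this assms(2)]
  show "deriv (deriv chi) t = 2 * A t * chi t" by (rule ode)
  show "deriv \<sigma> t = chi t * Re (B t)" using arg_cong[where f=Re, OF eq] by simp
  show "deriv \<rho> t = - (chi t * Im (B t))" using arg_cong[where f=Im, OF eq] by simp
qed

end

section \<open>A second solution of \<open>\<chi>'' = 2A\<chi>\<close>\<close>

lemma reduction_of_order_deriv:
  fixes u w a F R :: real
  assumes "R \<noteq> 0" "R = u\<^sup>2 + w\<^sup>2"
  shows "(1 + 2 * a) * (u\<^sup>2 - w\<^sup>2) / R\<^sup>2 * u + F * w - ((2 * a * u) * R - w * (2 * u * w + 2 * w * (2 * a * u))) / (R * R)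
     = F * w + u / R"
proof -
  have h: "(1 + 2 * a) * (u\<^sup>2 - w\<^sup>2) * u - ((2 * a * u) * R - w * (2 * u * w + 2 * w * (2 * a * u))) = u * R"
    unfolding assms(2) by (simp add: power2_eq_square algebra_simps)
  have "(1 + 2 * a) * (u\<^sup>2 - w\<^sup>2) / R\<^sup>2 * u + F * w - ((2 * a * u) * R - w * (2 * u * w + 2 * w * (2 * a * u))) / (R * R)
     = F * w + ((1 + 2 * a) * (u\<^sup>2 - w\<^sup>2) * u - ((2 * a * u) * R - w * (2 * u * w + 2 * w * (2 * a * u)))) / (R * R)"
    by (simp add: power2_eq_square diff_divide_distrib)
  also have "\<dots> = F * w + u / R" unfolding h using assms(1) by simp
  finally show ?thesis .
qed

lemma reduction_of_order_deriv2:
  fixes u w a F R :: real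
  assumes "R \<noteq> 0" "R = u\<^sup>2 + w\<^sup>2"
  shows "(1 + 2 * a) * (u\<^sup>2 - w\<^sup>2) / R\<^sup>2 * w + F * (2 * a * u) + (w * R - u * (2 * u * w + 2 * w * (2 * a * u))) / (R * R)
     = 2 * a * (F * u - w / R)"
proof -
  have h: "(1 + 2 * a) * (u\<^sup>2 - w\<^sup>2) * w + (w * R - u * (2 * u * w + 2 * w * (2 * a * u))) = (- 2 * a * w) * R"
    unfolding assms(2) by (simp add: power2_eq_square algebra_simps)
  have "(1 + 2 * a) * (u\<^sup>2 - w\<^sup>2) / R\<^sup>2 * w + F * (2 * a * u) + (w * R - u * (2 * u * w + 2 * w * (2 * a * u))) / (R * R)
     = F * (2 * a * u) + ((1 + 2 * a) * (u\<^sup>2 - w\<^sup>2) * w + (w * R - u * (2 * u * w + 2 * w * (2 * a * u)))) / (R * R)"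
    by (simp add: power2_eq_square add_divide_distrib)
  also have "\<dots> = 2 * a * (F * u - w / R)" unfolding h using assms(1) by (simp add: algebra_simps)
  finally show ?thesis .
qed

context nonzero_gmi_sym
begin

definition v where "v = deriv chi0"
definition R where "R t = (chi0 t)\<^sup>2 + (v t)\<^sup>2" for t

text \<open>Reduction of order with the ansatz \<open>\<chi>\<^sub>1 = F\<chi>\<^sub>0 - \<chi>\<^sub>0'/R\<close>, \<open>R = \<chi>\<^sub>0\<^sup>2 + \<chi>\<^sub>0'\<^sup>2\<close>: unlike
  \<open>\<chi>\<^sub>0 \<integral> \<chi>\<^sub>0\<^sup>-\<^sup>2\<close> it needs no division by \<open>\<chi>\<^sub>0\<close>, which may vanish, and makes the Wronskian 1.\<close>

definition F' where "F' t = (1 + 2 * A t) * ((chi0 t)\<^sup>2 - (v t)\<^sup>2) / (R t)\<^sup>2" for t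
definition F where "F = antideriv T F'"
definition chi1 where "chi1 t = F t * chi0 t - v t / R t" for t
definition v1 where "v1 t = F t * v t + chi0 t / R t" for t

lemma DERIV_chi0: "t \<in> T \<Longrightarrow> (chi0 has_real_derivative v t) (at t)"
  using gmi_sym_DERIV(1)[OF gmi_sym0] by (simp add: v_def)

lemma DERIV_v: "t \<in> T \<Longrightarrow> (v has_real_derivative 2 * A t * chi0 t) (at t)"
  using gmi_sym_DERIV(2)[OF gmi_sym0] gmi_sym_derivs(1)[OF gmi_sym0] by (simp add: v_def)

lemma R_pos: "t \<in> T \<Longrightarrow> R t > 0"
proof (rule ccontr)
  assume t: "t \<in> T" and "\<not> R t > 0"
  then have "R t = 0" unfolding R_def by (smt (verit) sum_power2_ge_zero)
  then have "chi0 t = 0" "deriv chi0 t = 0" unfolding R_def v_def by (simp_all add: sum_power2_eq_zero_iff)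
  then show False using gmi_sym_zero_if_zero_at[OF gmi_sym0 t] nonzero0 by blast
qed

lemma smooth_on_chi0: "smooth_on T chi0" using gmi_sym0 by (simp add: gmi_sym_def)
lemma smooth_on_v: "smooth_on T v" unfolding v_def by (rule smooth_on_deriv[OF open_T smooth_on_chi0])
lemma smooth_on_R: "smooth_on T R"
  unfolding R_def power2_eq_square
  by (intro smooth_on_add[OF open_T] smooth_on_mult[OF open_T] smooth_on_chi0 smooth_on_v)

lemma smooth_on_inverse_R: "smooth_on T (\<lambda>t. inverse (R t))"
  by (rule smooth_on_inverse[OF open_T _ smooth_on_R]) (use R_pos in force)

lemma smooth_on_F': "smooth_on T F'"
proof -
  have "F' = (\<lambda>t. (1 + 2 * A t) * (chi0 t * chi0 t + - (v t * v t)) * (inverse (R t) * inverse (R t)))"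
    by (simp add: fun_eq_iff F'_def power2_eq_square divide_inverse)
  moreover have "smooth_on T \<dots>"
    by (intro smooth_on_mult[OF open_T] smooth_on_add[OF open_T] smooth_on_const smooth_on_uminus[OF open_T]
        smooth_on_chi0 smooth_on_v smooth_on_inverse_R smooth_on_A_B(1))
  ultimately show ?thesis by simp
qed

lemma DERIV_F: "t \<in> T \<Longrightarrow> (F has_real_derivative F' t) (at t)"
  unfolding F_def
  by (rule has_real_derivative_antideriv[OF open_T connected_T smooth_on_imp_continuous_on[OF smooth_on_F']])

lemma smooth_on_F: "smooth_on T F" by (rule smooth_on_antiderivative[OF open_T DERIV_F smooth_on_F'])

lemma DERIV_R: "t \<in> T \<Longrightarrow> (R has_real_derivative 2 * chi0 t * v t + 2 * v t * (2 * A t * chi0 t)) (at t)"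
  unfolding R_def by (rule derivative_eq_intros DERIV_chi0 DERIV_v refl | simp)+

lemma DERIV_chi1: "t \<in> T \<Longrightarrow> (chi1 has_real_derivative v1 t) (at t)"
proof -
  assume t: "t \<in> T"
  have R: "R t \<noteq> 0" using R_pos[OF t] by simp
  have "(chi1 has_real_derivative F' t * chi0 t + F t * v t -
      ((2 * A t * chi0 t) * R t - v t * (2 * chi0 t * v t + 2 * v t * (2 * A t * chi0 t))) / (R t * R t)) (at t)"
    unfolding chi1_def
    by (rule derivative_eq_intros DERIV_F[OF t] DERIV_chi0[OF t] DERIV_v[OF t] DERIV_R[OF t] R refl | simp)+
  moreover have "F' t * chi0 t + F t * v t -
      ((2 * A t * chi0 t) * R t - v t * (2 * chi0 t * v t + 2 * v t * (2 * A t * chi0 t))) / (R t * R t) = v1 t"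
    unfolding v1_def F'_def by (rule reduction_of_order_deriv[OF R]) (simp add: R_def)
  ultimately show ?thesis by simp
qed

lemma DERIV_v1: "t \<in> T \<Longrightarrow> (v1 has_real_derivative 2 * A t * chi1 t) (at t)"
proof -
  assume t: "t \<in> T"
  have R: "R t \<noteq> 0" using R_pos[OF t] by simp
  have "(v1 has_real_derivative F' t * v t + F t * (2 * A t * chi0 t) +
      (v t * R t - chi0 t * (2 * chi0 t * v t + 2 * v t * (2 * A t * chi0 t))) / (R t * R t)) (at t)"
    unfolding v1_def
    by (rule derivative_eq_intros DERIV_F[OF t] DERIV_chi0[OF t] DERIV_v[OF t] DERIV_R[OF t] R refl | simp)+
  moreover have "F' t * v t + F t * (2 * A t * chi0 t) +
      (v t * R t - chi0 t * (2 * chi0 t * v t + 2 * v t * (2 * A t * chi0 t))) / (R t * R t) = 2 * A t * chi1 t"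
    unfolding chi1_def F'_def by (rule reduction_of_order_deriv2[OF R]) (simp add: R_def)
  ultimately show ?thesis by simp
qed

lemma deriv_chi1: "t \<in> T \<Longrightarrow> deriv chi1 t = v1 t"
  using DERIV_chi1 DERIV_imp_deriv by blast

lemma deriv2_chi1: "t \<in> T \<Longrightarrow> deriv (deriv chi1) t = 2 * A t * chi1 t"
  by (rule DERIV_imp_deriv, rule has_field_derivative_transform_within_open[OF DERIV_v1 open_T])
    (auto simp: deriv_chi1)

lemma wronskian_chi0_chi1: "t \<in> T \<Longrightarrow> chi0 t * v1 t - v t * chi1 t = 1"
proof -
  assume t: "t \<in> T"
  have R: "R t \<noteq> 0" using R_pos[OF t] by simp
  have "chi0 t * v1 t - v t * chi1 t = (chi0 t * chi0 t + v t * v t) / R t"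
    unfolding v1_def chi1_def using R by (simp add: field_simps)
  also have "\<dots> = 1" using R by (simp add: R_def power2_eq_square)
  finally show ?thesis .
qed

lemma smooth_on_chi1: "smooth_on T chi1"
proof -
  have "chi1 = (\<lambda>t. F t * chi0 t + - (v t * inverse (R t)))"
    by (simp add: fun_eq_iff chi1_def divide_inverse)
  moreover have "smooth_on T \<dots>"
    by (intro smooth_on_add[OF open_T] smooth_on_mult[OF open_T] smooth_on_uminus[OF open_T]
        smooth_on_F smooth_on_chi0 smooth_on_v smooth_on_inverse_R)
  ultimately show ?thesis by simp
qed

definition \<sigma>1' where "\<sigma>1' t = chi1 t * Re (B t)" for t
definition \<rho>1' where "\<rho>1' t = - (chi1 t * Im (B t))" for t
definition \<sigma>1 where "\<sigma>1 = antideriv T \<sigma>1'"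
definition \<rho>1 where "\<rho>1 = antideriv T \<rho>1'"

lemma smooth_on_\<sigma>1'_\<rho>1': "smooth_on T \<sigma>1'" "smooth_on T \<rho>1'"
proof -
  have B: "smooth_on T (\<lambda>t. Re (B t))" "smooth_on T (\<lambda>t. Im (B t))"
    by (rule smooth_on_compose_bounded_linear[OF open_T _ smooth_on_A_B(2)]; simp add: bounded_linear_Re bounded_linear_Im)+
  show "smooth_on T \<sigma>1'" "smooth_on T \<rho>1'" unfolding \<sigma>1'_def \<rho>1'_def
    by (intro smooth_on_uminus[OF open_T] smooth_on_mult[OF open_T] smooth_on_chi1 B)+
qed

lemma DERIV_\<sigma>1_\<rho>1:
  "t \<in> T \<Longrightarrow> (\<sigma>1 has_real_derivative \<sigma>1' t) (at t)" "t \<in> T \<Longrightarrow> (\<rho>1 has_real_derivative \<rho>1' t) (at t)"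
  unfolding \<sigma>1_def \<rho>1_def
  by (rule has_real_derivative_antideriv[OF open_T connected_T smooth_on_imp_continuous_on];
      use smooth_on_\<sigma>1'_\<rho>1' in simp)+

lemma gmi_sym1: "gmi_sym chi1 \<sigma>1 \<rho>1"
proof -
  have "deriv \<sigma>1 t = \<sigma>1' t" "deriv \<rho>1 t = \<rho>1' t" if "t \<in> T" for t
    using DERIV_\<sigma>1_\<rho>1[OF that] DERIV_imp_deriv by blast+
  then have "gmi_determining V \<Omega> chi1 \<sigma>1 \<rho>1"
    by (intro gmi_determining_if_ode) (simp_all add: deriv2_chi1 \<sigma>1'_def \<rho>1'_def complex_eq_iff)
  then show ?thesis unfolding gmi_sym_def
    using smooth_on_chi1 smooth_on_antiderivative[OF open_T DERIV_\<sigma>1_\<rho>1(1) smooth_on_\<sigma>1'_\<rho>1'(1)]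
      smooth_on_antiderivative[OF open_T DERIV_\<sigma>1_\<rho>1(2) smooth_on_\<sigma>1'_\<rho>1'(2)] by blast
qed

section \<open>Counting dimensions\<close>

lemma gmi_sym_chi_span:
  assumes S: "gmi_sym chi \<sigma> \<rho>"
  obtains a b where "\<And>t. t \<in> T \<Longrightarrow> chi t = a * chi0 t + b * chi1 t \<and> deriv chi t = a * v t + b * v1 t"
proof -
  note dchi = gmi_sym_DERIV(1)[OF S] and ddchi = gmi_sym_DERIV(2)[OF S]
  have ode: "deriv (deriv chi) t = 2 * A t * chi t" if "t \<in> T" for t using gmi_sym_derivs(1)[OF S that] .
  \<comment> \<open>the Wronskians of \<open>\<chi>\<close> with \<open>\<chi>\<^sub>1\<close> and with \<open>\<chi>\<^sub>0\<close> are constant\<close>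
  have W1: "((\<lambda>t. chi t * v1 t - deriv chi t * chi1 t) has_real_derivative 0) (at t)" if t: "t \<in> T" for t
  proof -
    have "((\<lambda>t. chi t * v1 t - deriv chi t * chi1 t) has_real_derivative
        deriv chi t * v1 t + chi t * (2 * A t * chi1 t) - (deriv (deriv chi) t * chi1 t + deriv chi t * v1 t)) (at t)"
      by (rule derivative_eq_intros dchi[OF t] ddchi[OF t] DERIV_v1[OF t] DERIV_chi1[OF t] refl | simp)+
    then show ?thesis using ode[OF t] by (simp add: algebra_simps)
  qed
  obtain a where a: "\<And>t. t \<in> T \<Longrightarrow> chi t * v1 t - deriv chi t * chi1 t = a"
    using DERIV_zero_open_connected_constant[OF connected_T open_T W1] by blast
  have W0: "((\<lambda>t. chi0 t * deriv chi t - v t * chi t) has_real_derivative 0) (at t)" if t: "t \<in> T" for t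
  proof -
    have "((\<lambda>t. chi0 t * deriv chi t - v t * chi t) has_real_derivative
        v t * deriv chi t + chi0 t * deriv (deriv chi) t - (2 * A t * chi0 t * chi t + v t * deriv chi t)) (at t)"
      by (rule derivative_eq_intros dchi[OF t] ddchi[OF t] DERIV_chi0[OF t] DERIV_v[OF t] refl | simp)+
    then show ?thesis using ode[OF t] by (simp add: algebra_simps)
  qed
  obtain b where b: "\<And>t. t \<in> T \<Longrightarrow> chi0 t * deriv chi t - v t * chi t = b"
    using DERIV_zero_open_connected_constant[OF connected_T open_T W0] by blast
  show ?thesis
  proof (rule that)
    fix t assume t: "t \<in> T"
    have w: "chi0 t * v1 t - v t * chi1 t = 1" by (rule wronskian_chi0_chi1[OF t])
    have "chi0 t * (deriv chi t - a * v t - b * v1 t) + v t * (- (chi t - a * chi0 t - b * chi1 t))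
        = (chi0 t * deriv chi t - v t * chi t) - b * (chi0 t * v1 t - v t * chi1 t)"
      by (simp add: algebra_simps)
    also have "\<dots> = 0" using b[OF t] w by simp
    finally have e0: "chi0 t * (deriv chi t - a * v t - b * v1 t) + v t * (- (chi t - a * chi0 t - b * chi1 t)) = 0" .
    have "chi1 t * (deriv chi t - a * v t - b * v1 t) + v1 t * (- (chi t - a * chi0 t - b * chi1 t))
        = a * (chi0 t * v1 t - v t * chi1 t) - (chi t * v1 t - deriv chi t * chi1 t)"
      by (simp add: algebra_simps)
    also have "\<dots> = 0" using a[OF t] w by simp
    finally have e1: "chi1 t * (deriv chi t - a * v t - b * v1 t) + v1 t * (- (chi t - a * chi0 t - b * chi1 t)) = 0" .
    have "deriv chi t - a * v t - b * v1 t = 0" "- (chi t - a * chi0 t - b * chi1 t) = 0"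
      using unimodular_kernel_zero[OF w e0 e1] by auto
    then show "chi t = a * chi0 t + b * chi1 t \<and> deriv chi t = a * v t + b * v1 t" by simp
  qed
qed

lemma gmi_sym_span:
  assumes S: "gmi_sym chi \<sigma> \<rho>"
  obtains a b c d where "\<And>t. t \<in> T \<Longrightarrow> chi t = a * chi0 t + b * chi1 t \<and> deriv chi t = a * v t + b * v1 t
     \<and> \<sigma> t = a * \<sigma>0 t + b * \<sigma>1 t + c \<and> \<rho> t = a * \<rho>0 t + b * \<rho>1 t + d"
proof -
  obtain a b where ab: "\<And>t. t \<in> T \<Longrightarrow> chi t = a * chi0 t + b * chi1 t \<and> deriv chi t = a * v t + b * v1 t"
    using gmi_sym_chi_span[OF S] by blast
  have dsigma: "((\<lambda>t. \<sigma> t - a * \<sigma>0 t - b * \<sigma>1 t) has_real_derivative 0) (at t)" if t: "t \<in> T" for t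
  proof -
    have "((\<lambda>t. \<sigma> t - a * \<sigma>0 t - b * \<sigma>1 t) has_real_derivative deriv \<sigma> t - a * deriv \<sigma>0 t - b * \<sigma>1' t) (at t)"
      by (rule derivative_eq_intros gmi_sym_DERIV(3)[OF S t] gmi_sym_DERIV(3)[OF gmi_sym0 t]
          DERIV_\<sigma>1_\<rho>1(1)[OF t] refl | simp)+
    then show ?thesis
      using gmi_sym_derivs(2)[OF S t] gmi_sym_derivs(2)[OF gmi_sym0 t] ab[OF t] by (simp add: \<sigma>1'_def algebra_simps)
  qed
  obtain c where c: "\<And>t. t \<in> T \<Longrightarrow> \<sigma> t - a * \<sigma>0 t - b * \<sigma>1 t = c"
    using DERIV_zero_open_connected_constant[OF connected_T open_T dsigma] by blast
  have drho: "((\<lambda>t. \<rho> t - a * \<rho>0 t - b * \<rho>1 t) has_real_derivative 0) (at t)" if t: "t \<in> T" for t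
  proof -
    have "((\<lambda>t. \<rho> t - a * \<rho>0 t - b * \<rho>1 t) has_real_derivative deriv \<rho> t - a * deriv \<rho>0 t - b * \<rho>1' t) (at t)"
      by (rule derivative_eq_intros gmi_sym_DERIV(4)[OF S t] gmi_sym_DERIV(4)[OF gmi_sym0 t]
          DERIV_\<sigma>1_\<rho>1(2)[OF t] refl | simp)+
    then show ?thesis
      using gmi_sym_derivs(3)[OF S t] gmi_sym_derivs(3)[OF gmi_sym0 t] ab[OF t] by (simp add: \<rho>1'_def algebra_simps)
  qed
  obtain d where d: "\<And>t. t \<in> T \<Longrightarrow> \<rho> t - a * \<rho>0 t - b * \<rho>1 t = d"
    using DERIV_zero_open_connected_constant[OF connected_T open_T drho] by blast
  show ?thesis
  proof (rule that[of a b c d])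
    fix t assume t: "t \<in> T"
    have "\<sigma> t = a * \<sigma>0 t + b * \<sigma>1 t + c" "\<rho> t = a * \<rho>0 t + b * \<rho>1 t + d"
      using c[OF t] d[OF t] by linarith+
    then show "chi t = a * chi0 t + b * chi1 t \<and> deriv chi t = a * v t + b * v1 t
       \<and> \<sigma> t = a * \<sigma>0 t + b * \<sigma>1 t + c \<and> \<rho> t = a * \<rho>0 t + b * \<rho>1 t + d" using ab[OF t] by blast
  qed
qed

definition Q0 where "Q0 = gmi_field \<Omega> chi0 \<sigma>0 \<rho>0"
definition Q1 where "Q1 = gmi_field \<Omega> chi1 \<sigma>1 \<rho>1"

lemma fields_independent:
  assumes Z: "vscale a Q0 + vscale b Q1 + vscale c field_M + vscale d field_I = 0"
  shows "a = 0 \<and> b = 0 \<and> c = 0 \<and> d = 0"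
proof -
  obtain t where t: "t \<in> T" using nonzero0 by blast
  define x0 x1 where "x0 = xa t" and "x1 = xb t"
  have x01: "x0 \<noteq> x1" and in\<Omega>: "(t, x0) \<in> \<Omega>" "(t, x1) \<in> \<Omega>"
    using xa[OF t] xb[OF t] by (auto simp: x0_def x1_def)
  \<comment> \<open>the \<open>\<partial>\<^sub>x\<close>- and \<open>\<partial>\<^sub>\<psi>\<close>-components at \<open>(t, x, 1)\<close>\<close>
  have ev: "a * chi0 t + b * chi1 t = 0 \<and>
      a *\<^sub>R gmi_factor (deriv chi0) \<sigma>0 \<rho>0 (t, x, 1) + b *\<^sub>R gmi_factor (deriv chi1) \<sigma>1 \<rho>1 (t, x, 1)
      + c *\<^sub>R \<i> + d *\<^sub>R 1 = 0" if "(t, x) \<in> \<Omega>" for x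
  proof -
    have "(vscale a Q0 + vscale b Q1 + vscale c field_M + vscale d field_I) (t, x, 1) = 0" using Z by simp
    then show ?thesis
      by (simp add: vscale_def Q0_def Q1_def gmi_field_apply[OF that] field_M_apply[OF that] field_I_apply[OF that]
          zero_prod_def)
  qed
  define W where "W = a * v t + b * v1 t"
  define K where "K = a * \<sigma>0 t + b * \<sigma>1 t + c"
  have Im: "W * x / 2 + K = 0" if "(t, x) \<in> \<Omega>" for x
  proof -
    have "Im (a *\<^sub>R gmi_factor (deriv chi0) \<sigma>0 \<rho>0 (t, x, 1) + b *\<^sub>R gmi_factor (deriv chi1) \<sigma>1 \<rho>1 (t, x, 1)
        + c *\<^sub>R \<i> + d *\<^sub>R 1) = W * x / 2 + K"
      by (simp add: gmi_factor_def W_def K_def v_def deriv_chi1[OF t] algebra_simps)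
    then show ?thesis using ev[OF that] by simp
  qed
  have "W * (x1 - x0) = 2 * ((W * x1 / 2 + K) - (W * x0 / 2 + K))" by (simp add: algebra_simps)
  then have "W * (x1 - x0) = 0" using Im in\<Omega> by simp
  then have e2: "v t * a + v1 t * b = 0" using x01 by (simp add: W_def mult.commute)
  have e1: "chi0 t * a + chi1 t * b = 0" using conjunct1[OF ev[OF in\<Omega>(1)]] by (simp add: mult.commute)
  have w: "chi0 t * v1 t - chi1 t * v t = 1" using wronskian_chi0_chi1[OF t] by (simp add: mult.commute)
  have ab: "a = 0" "b = 0" using unimodular_kernel_zero[OF w e1 e2] by auto
  then have "vscale c field_M + vscale d field_I = 0" using Z by (simp add: vscale_def fun_eq_iff)
  then show ?thesis using ab field_M_I_independent by blast
qed

lemma distinct_fields: "distinct [Q0, Q1, field_M, field_I]"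
proof -
  have "Q0 \<noteq> Q1" "Q0 \<noteq> field_M" "Q0 \<noteq> field_I" "Q1 \<noteq> field_M" "Q1 \<noteq> field_I"
    using fields_independent[of 1 "-1" 0 0] fields_independent[of 1 0 "-1" 0]
      fields_independent[of 1 0 0 "-1"] fields_independent[of 0 1 "-1" 0]
      fields_independent[of 0 1 0 "-1"]
    by (auto simp: vscale_def fun_eq_iff)
  then show ?thesis using field_M_neq_I by simp
qed

lemma vf_dim_nonzero_case: "vf_dim (ess_alg V \<Omega> \<inter> span_GMI \<Omega>) = 4"
proof -
  interpret vs: vector_space vscale by (rule vector_space_vscale)
  let ?S = "ess_alg V \<Omega> \<inter> span_GMI \<Omega>"
  have "Q0 \<in> ?S" "Q1 \<in> ?S"
    unfolding Q0_def Q1_def gmi_field_mem_iff_gmi_sym using gmi_sym0 gmi_sym1 by blast+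
  then have sub: "{Q0, Q1, field_M, field_I} \<subseteq> ?S" using field_M_mem field_I_mem by auto
  have span: "?S \<subseteq> vs.span {Q0, Q1, field_M, field_I}"
  proof
    fix Q assume "Q \<in> ?S"
    then obtain chi \<sigma> \<rho> where S: "gmi_sym chi \<sigma> \<rho>" and Q: "Q = gmi_field \<Omega> chi \<sigma> \<rho>"
      using gmi_field_mem_iff_gmi_sym by blast
    obtain a b c d where abcd: "\<And>t. t \<in> T \<Longrightarrow> chi t = a * chi0 t + b * chi1 t \<and> deriv chi t = a * v t + b * v1 t
       \<and> \<sigma> t = a * \<sigma>0 t + b * \<sigma>1 t + c \<and> \<rho> t = a * \<rho>0 t + b * \<rho>1 t + d"
      using gmi_sym_span[OF S] by blast
    have "Q = vscale a Q0 + vscale b Q1 + vscale c field_M + vscale d field_I"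
      unfolding Q Q0_def Q1_def field_M_def field_I_def
      by (rule gmi_field_lincomb) (simp_all add: abcd deriv_const_fun v_def deriv_chi1)
    then show "Q \<in> vs.span {Q0, Q1, field_M, field_I}"
      by (simp add: vs.span_add vs.span_scale vs.span_base)
  qed
  have "vs.independent {Q0, Q1, field_M, field_I}"
  proof (rule vs.independent_if_scalars_zero)
    fix f :: "vfield \<Rightarrow> real" and Q assume sum: "(\<Sum>x\<in>{Q0, Q1, field_M, field_I}. vscale (f x) x) = 0"
      and Q: "Q \<in> {Q0, Q1, field_M, field_I}"
    have "vscale (f Q0) Q0 + vscale (f Q1) Q1 + vscale (f field_M) field_M + vscale (f field_I) field_I = 0"
      using sum distinct_fields by (simp add: add.assoc)
    then show "f Q = 0" using Q fields_independent by blast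
  qed simp
  then have "vs.dim ?S = 4" by (rule vs.dim_unique[OF sub span]) (use distinct_fields in simp)
  then show ?thesis by (simp add: vf_dim_def)
qed

end

lemma (in smooth_potential) vf_dim_zero_case:
  assumes H: "\<And>chi \<sigma> \<rho> t. gmi_sym chi \<sigma> \<rho> \<Longrightarrow> t \<in> T \<Longrightarrow> chi t = 0"
  shows "vf_dim (ess_alg V \<Omega> \<inter> span_GMI \<Omega>) = 2"
proof -
  interpret vs: vector_space vscale by (rule vector_space_vscale)
  let ?S = "ess_alg V \<Omega> \<inter> span_GMI \<Omega>"
  have span: "?S \<subseteq> vs.span {field_M, field_I}"
  proof
    fix Q assume "Q \<in> ?S"
    then obtain chi \<sigma> \<rho> where S: "gmi_sym chi \<sigma> \<rho>" and Q: "Q = gmi_field \<Omega> chi \<sigma> \<rho>"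
      using gmi_field_mem_iff_gmi_sym by blast
    have z: "chi t = 0" if "t \<in> T" for t using H[OF S that] .
    have z1: "deriv chi t = 0" if "t \<in> T" for t by (rule deriv_zero_if_zero_on_open[OF open_T z that])
    have "deriv \<sigma> t = 0 \<and> deriv \<rho> t = 0" if t: "t \<in> T" for t
    proof -
      obtain x where x: "(t, x) \<in> \<Omega>" using t by auto
      have "deriv (deriv chi) t = 0" by (rule deriv_zero_if_zero_on_open[OF open_T z1 t])
      then have "0 = complex_of_real (deriv \<sigma> t) - \<i> * of_real (deriv \<rho> t)"
        using S x z[OF t] unfolding gmi_sym_def gmi_determining_def by force
      then show ?thesis by (simp add: complex_eq_iff)
    qed
    then have "(\<sigma> has_real_derivative 0) (at t)" "(\<rho> has_real_derivative 0) (at t)" if "t \<in> T" for t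
      using gmi_sym_DERIV(3,4)[OF S that] that by auto
    then obtain c d where c: "\<And>t. t \<in> T \<Longrightarrow> \<sigma> t = c" and d: "\<And>t. t \<in> T \<Longrightarrow> \<rho> t = d"
      using DERIV_zero_open_connected_constant[OF connected_T open_T, of \<sigma>]
        DERIV_zero_open_connected_constant[OF connected_T open_T, of \<rho>] by metis
    have "Q = vscale 0 field_M + vscale 0 field_M + vscale c field_M + vscale d field_I"
      unfolding Q field_M_def field_I_def by (rule gmi_field_lincomb) (simp_all add: z z1 c d deriv_const_fun)
    then show "Q \<in> vs.span {field_M, field_I}" by (simp add: vs.span_add vs.span_scale vs.span_base)
  qed
  have ind: "vs.independent {field_M, field_I}"
  proof (rule vs.independent_if_scalars_zero)
    fix f :: "vfield \<Rightarrow> real" and Q assume "(\<Sum>x\<in>{field_M, field_I}. vscale (f x) x) = 0" "Q \<in> {field_M, field_I}"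
    then show "f Q = 0" using field_M_neq_I field_M_I_independent[of "f field_M" "f field_I"] by auto
  qed simp
  have "{field_M, field_I} \<subseteq> ?S" using field_M_mem field_I_mem by blast
  then have "vs.dim ?S = 2" by (rule vs.dim_unique[OF _ span ind]) (use field_M_neq_I in simp)
  then show ?thesis by (simp add: vf_dim_def)
qed

theorem lemma6:
  fixes V :: "real \<times> real \<Rightarrow> complex" and \<Omega> :: "(real \<times> real) set"
  assumes "open \<Omega>" and "connected \<Omega>" and "\<Omega> \<noteq> {}" and "smooth_on \<Omega> V"
  shows "int (vf_dim (ess_alg V \<Omega> \<inter> span_GMI \<Omega>)) - 2 \<in> {0, 2}"
proof -
  interpret smooth_potential V \<Omega> by unfold_locales (use assms in auto)
  show ?thesis
  proof (cases "\<exists>chi \<sigma> \<rho>. gmi_sym chi \<sigma> \<rho> \<and> (\<exists>t\<in>T. chi t \<noteq> 0)")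
    case True
    then obtain chi \<sigma> \<rho> where "gmi_sym chi \<sigma> \<rho>" "\<exists>t\<in>T. chi t \<noteq> 0" by blast
    then interpret nonzero_gmi_sym V \<Omega> chi \<sigma> \<rho> by unfold_locales
    show ?thesis using vf_dim_nonzero_case by simp
  next
    case False
    then have "\<And>chi \<sigma> \<rho> t. gmi_sym chi \<sigma> \<rho> \<Longrightarrow> t \<in> T \<Longrightarrow> chi t = 0" by blast
    then show ?thesis using vf_dim_zero_case by simp
  qed
qed

end
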